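(* Let $F\in\mathcal M$ be in almost quiver form with $\alpha$ active and $\beta$ inactive indices. (i) If $F$ is of type $UP$ with extra factor $(q^2;q^2)_k$, then $\tilde T^2F$ can be written in almost quiver form of type $UP$ with extra factor $(q^2;q^2)_k$, with $\alpha+\beta$ active and $\beta$ inactive indices. (ii) If $F$ is of type $OP$ with extra factor $(q^2;q^2)_k$, then $\tilde T^2F$ can be written in almost quiver form of type $OP$ with extra factor $(q^2;q^2)_k$, with $\alpha+\beta$ active and $\beta$ inactive indices. (iii) If $F$ is of type $OP$ with extra factor $(q^2;q^2)_{j-k}$, then $\tilde R^2F$ can be written in almost quiver form of type $OP$ with extra factor $(q^2;q^2)_{j-k}$, with $\alpha$ active and $\alpha+\beta$ inactive indices. (iv) If $F$ is of type $RI$ with extra factor $(q^2;q^2)_{j-k}$, then $\tilde R^2F$ can be written in almost quiver form of type $RI$ with extra factor $(q^2;q^2)_{j-k}$, with $\alpha$ active and $\alpha+\beta$ inactive indices.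
   Context: Notation: $(x;q^2)_n=\prod_{i=0}^{n-1}(1-xq^{2i})$; ${N\brack b_1,\dots,b_m}=\frac{(q^2;q^2)_N}{\prod(q^2;q^2)_{b_i}}$ for $\sum b_i=N$; ${N\brack k}_+={N\brack k,N-k}$. Formal skein setup: linearly independent symbols $X[j,k]$, $X\in\{UP,OP,RI\}$, $0\le k\le j$; $\mathcal M$ = formal sums $\sum_{j\ge0}\sum_X\sum_{k=0}^jc_{X,j,k}X[j,k]$, $c\in\mathbb{Q}(a,q)$. Twist operators (for fixed $j$, extended termwise): $T\,UP[j,k]=\sum_{h=k}^j(-q)^{h-j}q^{k^2}{h\brack k}_+UP[j,h]$; $R\,UP[j,k]=\sum_{h=0}^k(-q)^{h-j}a^{h-j}q^{-2kh+k^2+j^2}{j-h\brack k-h}_+OP[j,h]$; $T\,OP[j,k]=\sum_{h=k}^j(-q)^ha^kq^{k^2-2jk}{h\brack k}_+RI[j,h]$; $R\,OP[j,k]=\sum_{h=0}^k(-q)^{h-j}a^{k-j}q^{2h(j-k)+(k-j)^2}{j-h\brack k-h}_+UP[j,h]$; $T\,RI[j,k]=\sum_{h=k}^j(-q)^ha^hq^{k^2-2jh}{h\brack k}_+OP[j,h]$; $R\,RI[j,k]=\sum_{h=0}^k(-q)^hq^{h(2j-2k)+k^2-j^2}{j-h\brack k-h}_+RI[j,h]$. Rescaling $\rho(X[j,k])={j\brack k}_+X[j,k]$; $\tilde T=\rho T\rho^{-1}$, $\tilde R=\rho R\rho^{-1}$. Almost quiver form: an element of $\mathcal M$ of the form $$\sum_{\mathbf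 d\in\mathbb{N}^{m+n}}(-q)^{S\cdot\mathbf d}a^{A\cdot\mathbf d}q^{\mathbf d^TQ\mathbf d}(q^2;q^2)_{K\cdot\mathbf d}{|\mathbf d|\brack d_1,\dots,d_{m+n}}X[\,|\mathbf d|,\,d_1+\cdots+d_m\,]$$ with $S,A\in\mathbb{Z}^{m+n}$, $Q$ a symmetric integer matrix, $K\in\{0,1\}^{m+n}$, $|\mathbf d|=\sum d_i$, and a fixed type $X$; $d_1,\dots,d_m$ are the active indices ($m=\alpha$ of them), the rest inactive ($n=\beta$). Writing $j=|\mathbf d|$ and $k=d_1+\dots+d_m$, it has "extra factor $(q^2;q^2)_k$" if $K$ is $1$ exactly on the active indices, and "extra factor $(q^2;q^2)_{j-k}$" if $K$ is $1$ exactly on the inactive indices. "Can be written" means equality in $\mathcal M$ with such an expression (with new data). *)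

theory Defs
  imports "HOL-Computational_Algebra.Polynomial" "HOL-Computational_Algebra.Fraction_Field"
begin

text \<open>Coefficient field Q(a,q), realised as the fraction field of Q[a][q]
  (outer polynomial variable = q, inner polynomial variable = a).\<close>
type_synonym coef = "rat poly poly fract"

definition qv :: coef where "qv = Fract [:0, 1:] 1"
definition av :: coef where "av = Fract [:[:0, 1:]:] 1"

definition qpp :: "nat \<Rightarrow> coef" where
  "qpp n = (\<Prod>i<n. 1 - qv^2 * qv^(2*i))"

definition qbin :: "nat \<Rightarrow> nat \<Rightarrow> coef" where
  "qbin N k = qpp N / (qpp k * qpp (N - k))"

definition qmultinom :: "nat \<Rightarrow> (nat \<Rightarrow> nat) \<Rightarrow> coef" where
  "qmultinom r d = qpp (\<Sum>i<r. d i) / (\<Prod>i<r. qpp (d i))"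

datatype skein = UP | OP | RI

text \<open>Elements of M: the coefficient c X j k of X[j,k] (only k \<le> j is meaningful).\<close>
type_synonym melt = "skein \<Rightarrow> nat \<Rightarrow> nat \<Rightarrow> coef"

definition Top :: "melt \<Rightarrow> melt" where
  "Top F Y j h = (if h \<le> j then
     (case Y of
        UP \<Rightarrow> (\<Sum>k\<le>h. F UP j k * ((- qv) powi (int h - int j) * qv powi (int k ^ 2) * qbin h k))
      | RI \<Rightarrow> (\<Sum>k\<le>h. F OP j k * ((- qv) powi (int h) * av powi (int k)
                 * qv powi (int k ^ 2 - 2 * int j * int k) * qbin h k))
      | OP \<Rightarrow> (\<Sum>k\<le>h. F RI j k * ((- qv) powi (int h) * av powi (int h)
                 * qv powi (int k ^ 2 - 2 * int j * int h) * qbin h k)))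
   else 0)"

definition Rop :: "melt \<Rightarrow> melt" where
  "Rop F Y j h = (if h \<le> j then
     (case Y of
        OP \<Rightarrow> (\<Sum>k\<in>{h..j}. F UP j k * ((- qv) powi (int h - int j) * av powi (int h - int j)
                 * qv powi (- 2 * int k * int h + int k ^ 2 + int j ^ 2) * qbin (j - h) (k - h)))
      | UP \<Rightarrow> (\<Sum>k\<in>{h..j}. F OP j k * ((- qv) powi (int h - int j) * av powi (int k - int j)
                 * qv powi (2 * int h * (int j - int k) + (int k - int j) ^ 2) * qbin (j - h) (k - h)))
      | RI \<Rightarrow> (\<Sum>k\<in>{h..j}. F RI j k * ((- qv) powi (int h)
                 * qv powi (int h * (2 * int j - 2 * int k) + int k ^ 2 - int j ^ 2) * qbin (j - h) (k - h))))
   else 0)"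

definition rho :: "melt \<Rightarrow> melt" where
  "rho F X j k = qbin j k * F X j k"
definition rho_inv :: "melt \<Rightarrow> melt" where
  "rho_inv F X j k = F X j k / qbin j k"

definition Ttil :: "melt \<Rightarrow> melt" where "Ttil F = rho (Top (rho_inv F))"
definition Rtil :: "melt \<Rightarrow> melt" where "Rtil F = rho (Rop (rho_inv F))"

text \<open>Almost quiver form of type X with m active indices (0..m-1) and n inactive indices
  (m..m+n-1); S, A, Q, K only matter on indices < m+n; K i true means K_i = 1.\<close>
definition aqf :: "skein \<Rightarrow> nat \<Rightarrow> nat \<Rightarrow> (nat \<Rightarrow> int) \<Rightarrow> (nat \<Rightarrow> int)
    \<Rightarrow> (nat \<Rightarrow> nat \<Rightarrow> int) \<Rightarrow> (nat \<Rightarrow> bool) \<Rightarrow> melt" where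
  "aqf X m n S A Q K Y j k = (if Y = X then
     (\<Sum>d\<in>{d. (\<forall>i\<ge>m+n. d i = 0) \<and> (\<Sum>i<m+n. d i) = j \<and> (\<Sum>i<m. d i) = k}.
        (- qv) powi (\<Sum>i<m+n. S i * int (d i))
        * av powi (\<Sum>i<m+n. A i * int (d i))
        * qv powi (\<Sum>i<m+n. \<Sum>l<m+n. int (d i) * Q i l * int (d l))
        * qpp (\<Sum>i<m+n. if K i then d i else 0)
        * qmultinom (m+n) d)
   else 0)"

definition symQ :: "nat \<Rightarrow> (nat \<Rightarrow> nat \<Rightarrow> int) \<Rightarrow> bool" where
  "symQ N Q \<longleftrightarrow> (\<forall>i<N. \<forall>l<N. Q i l = Q l i)"

text \<open>Extra factor (q^2;q^2)_k: K is 1 exactly on the active indices.\<close>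
definition extra_k :: "nat \<Rightarrow> nat \<Rightarrow> (nat \<Rightarrow> bool) \<Rightarrow> bool" where
  "extra_k m n K \<longleftrightarrow> (\<forall>i<m+n. K i \<longleftrightarrow> i < m)"
text \<open>Extra factor (q^2;q^2)_(j-k): K is 1 exactly on the inactive indices.\<close>
definition extra_jk :: "nat \<Rightarrow> nat \<Rightarrow> (nat \<Rightarrow> bool) \<Rightarrow> bool" where
  "extra_jk m n K \<longleftrightarrow> (\<forall>i<m+n. K i \<longleftrightarrow> m \<le> i)"

end

theory Submission
  imports Defs
begin

(* After conjugation by the rescaling, T and R are triangular operators with q-binomial
   kernels. Applying one of them twice and summing over the intermediate index with the
   q-binomial theorem gives
     Ttil^2 F (j, l) = sum_k F (j, k) E(j, k, l) (q^2;q^2)_l / (q^2;q^2)_k [j - k, j - l],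
     Rtil^2 F (j, l) = sum_k F (j, k) E(j, k, l) (q^2;q^2)_(j-l) / (q^2;q^2)_(j-k) [k, l],
   where E is a monomial in q and a whose exponents are quadratic in j, k, l; the quotient
   of Pochhammer symbols trades the extra factor of F for that of the result.
   If F is in almost quiver form, then j - k (for Ttil^2) resp. k (for Rtil^2) is the sum of
   the inactive resp. active summation indices, and the multivariate q-Vandermonde identity
   splits each of these indices in two: one part becomes or stays active, the other one is a
   new inactive index, and the q-power created by the splitting is a quadratic form in the
   refined indices. Since j, k and l are linear in the refined indices, all exponents stay
   linear or quadratic, so the result is again in almost quiver form. *)

section \<open>q-binomial coefficients\<close>

lemma qv_power_eq_Fract: "qv ^ n = Fract ([:0, 1:] ^ n) 1"
  unfolding qv_def by (induct n) (simp_all add: One_fract_def)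

lemma qv_power_neq_1: "0 < n \<Longrightarrow> qv ^ n \<noteq> 1"
proof
  assume "0 < n" and "qv ^ n = 1"
  then have "([:0, 1:] :: rat poly poly) ^ n = 1"
    by (simp add: qv_power_eq_Fract One_fract_def eq_fract)
  then have "degree (([:0, 1:] :: rat poly poly) ^ n) = 0" by simp
  with \<open>0 < n\<close> show False by (simp add: degree_power_eq)
qed

lemma qv_neq_0 [simp]: "qv \<noteq> 0"
  unfolding qv_def by (simp add: Zero_fract_def eq_fract)

lemma av_neq_0 [simp]: "av \<noteq> 0"
  unfolding av_def by (simp add: Zero_fract_def eq_fract)

lemma qpp_0 [simp]: "qpp 0 = 1"
  by (simp add: qpp_def)

lemma qpp_Suc: "qpp (Suc n) = qpp n * (1 - qv ^ (2 * Suc n))"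
  by (simp add: qpp_def power_add power2_eq_square mult.assoc)

lemma qpp_neq_0 [simp]: "qpp n \<noteq> 0"
proof (induct n)
  case (Suc n)
  have "qv ^ (2 * Suc n) \<noteq> 1" by (rule qv_power_neq_1) simp
  with Suc show ?case unfolding qpp_Suc by (metis mult_eq_0_iff right_minus_eq)
qed simp

lemma qpp_add: "qpp (e + n) = qpp e * (\<Prod>i<n. 1 - qv ^ (1 + 2 * e) * qv ^ (2 * i + 1))"
proof (induct n)
  case (Suc n)
  have "qv ^ (1 + 2 * e) * qv ^ (2 * n + 1) = qv ^ (2 * Suc (e + n))"
    unfolding power_add [symmetric] by simp
  with Suc show ?case by (simp add: qpp_Suc)
qed simp

lemma qbin_neq_0 [simp]: "qbin n k \<noteq> 0"
  by (simp add: qbin_def)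

lemma qbin_symmetric: "k \<le> n \<Longrightarrow> qbin n (n - k) = qbin n k"
  by (simp add: qbin_def mult.commute)

lemma qbin_trinomial_revision:
  assumes "k \<le> h" "h \<le> n"
  shows "qbin n h * qbin h k = qbin n k * qbin (n - k) (h - k)"
proof -
  have "n - k - (h - k) = n - h" using assms by simp
  then show ?thesis using assms by (simp add: qbin_def)
qed

text \<open>\<^const>\<open>qbin\<close> does not vanish for \<open>k > n\<close> (truncated subtraction); \<open>qbinom\<close> extends it by zero.\<close>
definition qbinom :: "nat \<Rightarrow> nat \<Rightarrow> coef" where
  "qbinom n k = (if k \<le> n then qbin n k else 0)"

lemma qbinom_0 [simp]: "qbinom n 0 = 1"
  by (simp add: qbinom_def qbin_def)

lemma qbinom_self [simp]: "qbinom n n = 1"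
  by (simp add: qbinom_def qbin_def)

lemma qbinom_eq_0 [simp]: "n < k \<Longrightarrow> qbinom n k = 0"
  by (simp add: qbinom_def)

lemma qbinom_eq_qpp: "k \<le> n \<Longrightarrow> qbinom n k = qpp n / (qpp k * qpp (n - k))"
  by (simp add: qbinom_def qbin_def)

lemma qbinom_Suc_Suc: "qbinom (Suc n) (Suc k) = qv ^ (2 * (n - k)) * qbinom n k + qbinom n (Suc k)"
proof (cases "k < n")
  case True
  define u v where "u = 1 - qv ^ (2 * (n - k))" and "v = 1 - qv ^ (2 * Suc k)"
  have "u \<noteq> 0" "v \<noteq> 0"
    using True qv_power_neq_1 [of "2 * (n - k)"] qv_power_neq_1 [of "2 * Suc k"]
    by (auto simp: u_def v_def)
  have Suc_n: "qpp (Suc n) = qpp n * (1 - (1 - u) * (1 - v))"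
  proof -
    have "2 * Suc n = 2 * (n - k) + 2 * Suc k" using True by simp
    then have "qv ^ (2 * Suc n) = qv ^ (2 * (n - k)) * qv ^ (2 * Suc k)"
      by (simp only: power_add [symmetric])
    then show ?thesis by (simp add: qpp_Suc u_def v_def)
  qed
  have n_k: "qpp (n - k) = qpp (n - Suc k) * u"
    using True qpp_Suc [of "n - Suc k"] by (simp add: u_def Suc_diff_Suc)
  have Suc_k: "qpp (Suc k) = qpp k * v"
    by (simp add: v_def qpp_Suc)
  have "qbinom (Suc n) (Suc k) = qpp n * (1 - (1 - u) * (1 - v)) / (qpp k * v * (qpp (n - Suc k) * u))"
    using True by (simp add: qbinom_eq_qpp Suc_n n_k Suc_k)
  also have "\<dots> = (1 - u) * (qpp n / (qpp k * (qpp (n - Suc k) * u))) + qpp n / (qpp k * v * qpp (n - Suc k))"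
    using \<open>u \<noteq> 0\<close> \<open>v \<noteq> 0\<close> by (simp add: field_simps)
  also have "\<dots> = qv ^ (2 * (n - k)) * qbinom n k + qbinom n (Suc k)"
    using True by (simp add: qbinom_eq_qpp n_k Suc_k u_def)
  finally show ?thesis .
next
  case False
  then show ?thesis by (cases "k = n") (auto simp: qbinom_def)
qed

lemma q_binomial_theorem:
  "(\<Sum>u\<le>n. (-1) ^ u * qv ^ (u * u) * z ^ u * qbinom n u) = (\<Prod>i<n. 1 - z * qv ^ (2 * i + 1))"
proof (induct n)
  case 0
  show ?case by simp
next
  case (Suc n)
  define P where "P u = (-1) ^ u * qv ^ (u * u) * z ^ u" for u
  have IH: "(\<Sum>u\<le>n. P u * qbinom n u) = (\<Prod>i<n. 1 - z * qv ^ (2 * i + 1))"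
    using Suc by (simp add: P_def)
  have shift: "(\<Sum>u\<le>n. P (Suc u) * qv ^ (2 * (n - u)) * qbinom n u)
      = - z * qv ^ (2 * n + 1) * (\<Sum>u\<le>n. P u * qbinom n u)"
    unfolding sum_distrib_left
  proof (rule sum.cong [OF refl])
    fix u assume "u \<in> {..n}"
    then obtain r where n: "n = u + r" by (metis atMost_iff le_Suc_ex)
    have "qv ^ (Suc u * Suc u) * qv ^ (2 * (n - u)) = qv ^ (2 * n + 1) * qv ^ (u * u)"
      unfolding power_add [symmetric] n by (simp add: algebra_simps)
    then show "P (Suc u) * qv ^ (2 * (n - u)) * qbinom n u = - z * qv ^ (2 * n + 1) * (P u * qbinom n u)"
      unfolding P_def by (simp add: algebra_simps)
  qed
  have low: "P 0 + (\<Sum>u\<le>n. P (Suc u) * qbinom n (Suc u)) = (\<Sum>u\<le>n. P u * qbinom n u)"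
    using sum.atMost_Suc_shift [of "\<lambda>u. P u * qbinom n u" n] by simp
  have "(\<Sum>u\<le>Suc n. P u * qbinom (Suc n) u)
      = (P 0 + (\<Sum>u\<le>n. P (Suc u) * qbinom n (Suc u))) + (\<Sum>u\<le>n. P (Suc u) * qv ^ (2 * (n - u)) * qbinom n u)"
    by (subst sum.atMost_Suc_shift) (simp add: qbinom_Suc_Suc sum.distrib algebra_simps)
  also have "\<dots> = (\<Prod>i<n. 1 - z * qv ^ (2 * i + 1)) * (1 - z * qv ^ (2 * n + 1))"
    unfolding low shift IH by (simp add: algebra_simps)
  finally show ?case by (simp add: P_def)
qed

lemma sum_qbinom_eq_qpp:
  "(\<Sum>u\<le>n. (- qv) ^ u * qv ^ (2 * u * e + u * u) * qbinom n u) = qpp (e + n) / qpp e"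
proof -
  have "(- qv) ^ u * qv ^ (2 * u * e + u * u) = (-1) ^ u * qv ^ (u * u) * (qv ^ (1 + 2 * e)) ^ u" for u
  proof -
    have "u + (2 * u * e + u * u) = u * u + (1 + 2 * e) * u" by (simp add: algebra_simps)
    then have "qv ^ u * qv ^ (2 * u * e + u * u) = qv ^ (u * u) * (qv ^ (1 + 2 * e)) ^ u"
      by (simp only: power_mult [symmetric] power_add [symmetric] mult.commute)
    then show ?thesis by (simp add: power_minus [of qv] mult.assoc)
  qed
  then show ?thesis by (simp add: q_binomial_theorem qpp_add)
qed

lemma qv_power_vandermonde:
  assumes "t \<le> c" "t \<le> r" "r - t \<le> a"
  shows "qv ^ (2 * (c - t)) * qv ^ (2 * (Suc t * (a - (r - t))))
    = qv ^ (2 * (a + c - r)) * qv ^ (2 * (t * (a - (r - t))))"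
proof -
  obtain c' w a' where "c = t + c'" "r = t + w" "a = w + a'"
    using assms le_Suc_ex by (metis add_diff_cancel_left')
  then show ?thesis unfolding power_add [symmetric] by (simp add: algebra_simps)
qed

lemma q_vandermonde:
  "(\<Sum>s\<le>r. qbinom c s * qv ^ (2 * (s * (a - (r - s)))) * qbinom a (r - s)) = qbinom (a + c) r"
proof (induct c arbitrary: r)
  case 0
  show ?case by (subst sum.atMost_shift) simp
next
  case (Suc c)
  define X where "X r s = qv ^ (2 * (s * (a - (r - s)))) * qbinom a (r - s)" for r s
  have IH: "(\<Sum>s\<le>r. qbinom c s * X r s) = qbinom (a + c) r" for r
    using Suc by (simp add: X_def mult.assoc)
  show ?case
  proof (cases r)
    case 0
    then show ?thesis by simp
  next
    case (Suc r')
    have low: "X r 0 + (\<Sum>t<r. qbinom c (Suc t) * X r (Suc t)) = qbinom (a + c) r"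
      using IH [of r] by (subst (asm) sum.atMost_shift) simp
    have high: "(\<Sum>t<r. qv ^ (2 * (c - t)) * qbinom c t * X r (Suc t)) = qv ^ (2 * (a + c - r')) * qbinom (a + c) r'"
      unfolding IH [of r', symmetric] sum_distrib_left Suc lessThan_Suc_atMost
    proof (rule sum.cong [OF refl])
      fix t assume t: "t \<in> {..r'}"
      show "qv ^ (2 * (c - t)) * qbinom c t * X (Suc r') (Suc t) = qv ^ (2 * (a + c - r')) * (qbinom c t * X r' t)"
      proof (cases "t \<le> c \<and> r' - t \<le> a")
        case True
        with t show ?thesis
          using qv_power_vandermonde [of t c r' a] unfolding X_def by (simp add: algebra_simps)
      next
        case False
        then show ?thesis unfolding X_def by (auto simp: not_le)
      qed
    qed
    have "(\<Sum>s\<le>r. qbinom (Suc c) s * X r s)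
        = X r 0 + (\<Sum>t<r. qv ^ (2 * (c - t)) * qbinom c t * X r (Suc t)) + (\<Sum>t<r. qbinom c (Suc t) * X r (Suc t))"
      by (subst sum.atMost_shift) (simp add: qbinom_Suc_Suc sum.distrib algebra_simps)
    also have "\<dots> = qv ^ (2 * (a + c - r')) * qbinom (a + c) r' + qbinom (a + c) r"
      using low high by (simp add: algebra_simps)
    also have "\<dots> = qbinom (Suc (a + c)) r"
      unfolding Suc qbinom_Suc_Suc by simp
    finally show ?thesis by (simp add: X_def mult.assoc)
  qed
qed

definition bounded_compositions :: "nat \<Rightarrow> (nat \<Rightarrow> nat) \<Rightarrow> nat \<Rightarrow> (nat \<Rightarrow> nat) set" where
  "bounded_compositions b c r = {f. (\<forall>i\<ge>b. f i = 0) \<and> (\<forall>i<b. f i \<le> c i) \<and> (\<Sum>i<b. f i) = r}"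

lemma finite_bounded_compositions [simp]: "finite (bounded_compositions b c r)"
proof (rule finite_subset)
  show "bounded_compositions b c r \<subseteq> {f. \<forall>x. (x \<in> {..<b} \<longrightarrow> f x \<in> {..r}) \<and> (x \<notin> {..<b} \<longrightarrow> f x = 0)}"
    by (auto simp: bounded_compositions_def intro: member_le_sum [of _ "{..<b}", simplified])
qed (intro finite_set_of_finite_funs; simp)

definition split_inversions :: "nat \<Rightarrow> (nat \<Rightarrow> nat) \<Rightarrow> (nat \<Rightarrow> nat) \<Rightarrow> nat" where
  "split_inversions b c f = (\<Sum>i<b. \<Sum>i'<b. if i < i' then (c i - f i) * f i' else 0)"

lemma split_inversions_upd:
  "split_inversions (Suc b) c (g(b := s)) = split_inversions b c g + (\<Sum>i<b. c i - g i) * s"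
proof -
  have "(\<Sum>i'<Suc b. if i < i' then (c i - (g(b := s)) i) * (g(b := s)) i' else 0)
      = (\<Sum>i'<b. if i < i' then (c i - g i) * g i' else 0) + (c i - g i) * s" if "i < b" for i
    using that by (auto intro!: sum.cong)
  then show ?thesis
    by (simp add: split_inversions_def sum.distrib sum_distrib_right)
qed

lemma bounded_compositions_fibre:
  assumes "s \<le> r" "s \<le> c b"
  shows "{f\<in>bounded_compositions (Suc b) c r. f b = s} = (\<lambda>g. g(b := s)) ` bounded_compositions b c (r - s)"
proof (intro equalityI subsetI)
  fix f assume f: "f \<in> {f\<in>bounded_compositions (Suc b) c r. f b = s}"
  then have "f(b := 0) \<in> bounded_compositions b c (r - s)"
    by (auto simp: bounded_compositions_def intro!: sum.cong)
  moreover have "f = (f(b := 0))(b := s)" using f by auto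
  ultimately show "f \<in> (\<lambda>g. g(b := s)) ` bounded_compositions b c (r - s)" by blast
next
  fix f assume "f \<in> (\<lambda>g. g(b := s)) ` bounded_compositions b c (r - s)"
  then obtain g where g: "g \<in> bounded_compositions b c (r - s)" "f = g(b := s)" by auto
  moreover have "(\<Sum>i<b. f i) = (\<Sum>i<b. g i)" using g by (intro sum.cong) auto
  ultimately show "f \<in> {f\<in>bounded_compositions (Suc b) c r. f b = s}"
    using assms by (auto simp: bounded_compositions_def less_Suc_eq)
qed

lemma inj_on_fun_upd_bounded_compositions: "inj_on (\<lambda>g. g(b := s)) (bounded_compositions b c r)"
proof (rule inj_onI, rule ext)
  fix g g' x
  assume "g \<in> bounded_compositions b c r" "g' \<in> bounded_compositions b c r" and upd: "g(b := s) = g'(b := s)"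
  show "g x = g' x"
  proof (cases "x = b")
    case True
    with \<open>g \<in> _\<close> \<open>g' \<in> _\<close> show ?thesis by (simp add: bounded_compositions_def)
  next
    case False
    with fun_cong [OF upd, of x] show ?thesis by simp
  qed
qed

lemma vandermonde_summand_upd:
  assumes "g \<in> bounded_compositions b c r"
  shows "(\<Prod>i<Suc b. qbinom (c i) ((g(b := s)) i)) * qv ^ (2 * split_inversions (Suc b) c (g(b := s)))
    = qbinom (c b) s * qv ^ (2 * (s * ((\<Sum>i<b. c i) - r)))
      * ((\<Prod>i<b. qbinom (c i) (g i)) * qv ^ (2 * split_inversions b c g))"
proof -
  have "(\<Sum>i<b. c i - g i) = (\<Sum>i<b. c i) - r"
    using assms unfolding bounded_compositions_def by (subst sum_subtractf_nat) auto
  moreover have "(\<Prod>i<b. qbinom (c i) ((g(b := s)) i)) = (\<Prod>i<b. qbinom (c i) (g i))"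
    by (rule prod.cong) auto
  ultimately show ?thesis
    unfolding split_inversions_upd by (simp add: power_add power_mult algebra_simps)
qed

lemma q_vandermonde_multi:
  "(\<Sum>f\<in>bounded_compositions b c r. (\<Prod>i<b. qbinom (c i) (f i)) * qv ^ (2 * split_inversions b c f))
    = qbinom (\<Sum>i<b. c i) r"
proof (induct b arbitrary: r)
  case 0
  have "bounded_compositions 0 c r = (if r = 0 then {\<lambda>_. 0} else {})"
    by (auto simp: bounded_compositions_def)
  then show ?case by (simp add: split_inversions_def)
next
  case (Suc b)
  define T where "T b f = (\<Prod>i<b. qbinom (c i) (f i)) * qv ^ (2 * split_inversions b c f)" for b f
  have fibre: "(\<Sum>f\<in>{f\<in>bounded_compositions (Suc b) c r. f b = s}. T (Suc b) f)
      = qbinom (c b) s * qv ^ (2 * (s * ((\<Sum>i<b. c i) - (r - s)))) * qbinom (\<Sum>i<b. c i) (r - s)" if "s \<le> r" for s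
  proof (cases "s \<le> c b")
    case False
    then have empty: "{f\<in>bounded_compositions (Suc b) c r. f b = s} = {}"
      by (auto simp: bounded_compositions_def)
    show ?thesis unfolding empty using False by simp
  next
    case True
    have "(\<Sum>f\<in>{f\<in>bounded_compositions (Suc b) c r. f b = s}. T (Suc b) f)
        = (\<Sum>g\<in>bounded_compositions b c (r - s). T (Suc b) (g(b := s)))"
      unfolding bounded_compositions_fibre [where c = c, OF that True]
      by (rule sum.reindex [OF inj_on_fun_upd_bounded_compositions, unfolded comp_def])
    also have "\<dots> = (\<Sum>g\<in>bounded_compositions b c (r - s). qbinom (c b) s * qv ^ (2 * (s * ((\<Sum>i<b. c i) - (r - s)))) * T b g)"
      unfolding T_def by (rule sum.cong [OF refl]) (rule vandermonde_summand_upd)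
    also have "\<dots> = qbinom (c b) s * qv ^ (2 * (s * ((\<Sum>i<b. c i) - (r - s)))) * qbinom (\<Sum>i<b. c i) (r - s)"
      using Suc by (simp add: T_def sum_distrib_left [symmetric])
    finally show ?thesis .
  qed
  have "(\<lambda>f. f b) ` bounded_compositions (Suc b) c r \<subseteq> {..r}"
    by (auto simp: bounded_compositions_def intro: member_le_sum [of b "{..<Suc b}", simplified])
  then have "(\<Sum>f\<in>bounded_compositions (Suc b) c r. T (Suc b) f)
      = (\<Sum>s\<le>r. \<Sum>f\<in>{f\<in>bounded_compositions (Suc b) c r. f b = s}. T (Suc b) f)"
    by (intro sum.group [symmetric]) simp_all
  also have "\<dots> = (\<Sum>s\<le>r. qbinom (c b) s * qv ^ (2 * (s * ((\<Sum>i<b. c i) - (r - s)))) * qbinom (\<Sum>i<b. c i) (r - s))"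
    by (rule sum.cong) (simp_all add: fibre)
  also have "\<dots> = qbinom ((\<Sum>i<b. c i) + c b) r"
    by (rule q_vandermonde)
  finally show ?case by (simp add: T_def)
qed

section \<open>The squared twist operators\<close>

definition qmon :: "int \<Rightarrow> int \<Rightarrow> int \<Rightarrow> coef" where
  "qmon x y z = (- qv) powi x * av powi y * qv powi z"

lemma qmon_mult: "qmon x y z * qmon x' y' z' = qmon (x + x') (y + y') (z + z')"
  unfolding qmon_def by (simp add: power_int_add)

lemma qmon_of_nat: "qmon (int u) 0 (int n) = (- qv) ^ u * qv ^ n"
  unfolding qmon_def by simp

lemma sum_qmon_qbin:
  assumes "a \<le> b"
  shows "(\<Sum>h\<in>{a..b}. qmon (int h) 0 (int h ^ 2 + 2 * int h * (int c - int a)) * qbin (b - a) (h - a))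
    = qmon (int a) 0 (2 * int a * int c - int a ^ 2) * (qpp (c + (b - a)) / qpp c)"
proof -
  have "(\<Sum>h\<in>{a..b}. qmon (int h) 0 (int h ^ 2 + 2 * int h * (int c - int a)) * qbin (b - a) (h - a))
      = (\<Sum>u\<le>b - a. qmon (int (u + a)) 0 (int (u + a) ^ 2 + 2 * int (u + a) * (int c - int a)) * qbinom (b - a) u)"
  proof -
    have "{a..b} = {0 + a..(b - a) + a}" using assms by simp
    then show ?thesis by (simp only: sum.shift_bounds_cl_nat_ivl) (simp add: atLeast0AtMost qbinom_def)
  qed
  also have "\<dots> = (\<Sum>u\<le>b - a. qmon (int a) 0 (2 * int a * int c - int a ^ 2) * ((- qv) ^ u * qv ^ (2 * u * c + u * u) * qbinom (b - a) u))"
  proof (rule sum.cong [OF refl])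
    fix u
    have "qmon (int (u + a)) 0 (int (u + a) ^ 2 + 2 * int (u + a) * (int c - int a))
        = qmon (int a) 0 (2 * int a * int c - int a ^ 2) * ((- qv) ^ u * qv ^ (2 * u * c + u * u))"
      unfolding qmon_of_nat [symmetric] qmon_mult by (simp add: algebra_simps power2_eq_square)
    then show "qmon (int (u + a)) 0 (int (u + a) ^ 2 + 2 * int (u + a) * (int c - int a)) * qbinom (b - a) u
        = qmon (int a) 0 (2 * int a * int c - int a ^ 2) * ((- qv) ^ u * qv ^ (2 * u * c + u * u) * qbinom (b - a) u)"
      by (simp only: mult.assoc)
  qed
  also have "\<dots> = qmon (int a) 0 (2 * int a * int c - int a ^ 2) * (qpp (c + (b - a)) / qpp c)"
    by (simp add: sum_distrib_left [symmetric] sum_qbinom_eq_qpp)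
  finally show ?thesis .
qed

definition T_source :: "skein \<Rightarrow> skein" where
  "T_source Y = (case Y of UP \<Rightarrow> UP | RI \<Rightarrow> OP | OP \<Rightarrow> RI)"

definition T_coeff :: "skein \<Rightarrow> nat \<Rightarrow> nat \<Rightarrow> nat \<Rightarrow> coef" where
  "T_coeff Y j k h = (case Y of
      UP \<Rightarrow> qmon (int h - int j) 0 (int k ^ 2)
    | RI \<Rightarrow> qmon (int h) (int k) (int k ^ 2 - 2 * int j * int k)
    | OP \<Rightarrow> qmon (int h) (int h) (int k ^ 2 - 2 * int j * int h))"

definition R_source :: "skein \<Rightarrow> skein" where
  "R_source Y = (case Y of UP \<Rightarrow> OP | RI \<Rightarrow> RI | OP \<Rightarrow> UP)"

definition R_coeff :: "skein \<Rightarrow> nat \<Rightarrow> nat \<Rightarrow> nat \<Rightarrow> coef" where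
  "R_coeff Y j k h = (case Y of
      OP \<Rightarrow> qmon (int h - int j) (int h - int j) (- 2 * int k * int h + int k ^ 2 + int j ^ 2)
    | UP \<Rightarrow> qmon (int h - int j) (int k - int j) (2 * int h * (int j - int k) + (int k - int j) ^ 2)
    | RI \<Rightarrow> qmon (int h) 0 (int h * (2 * int j - 2 * int k) + int k ^ 2 - int j ^ 2))"

lemma T_source_T_source [simp]: "T_source (T_source Y) = Y"
  by (cases Y) (simp_all add: T_source_def)

lemma R_source_R_source [simp]: "R_source (R_source Y) = Y"
  by (cases Y) (simp_all add: R_source_def)

lemma Ttil_eq:
  "Ttil F Y j h = (if h \<le> j then (\<Sum>k\<le>h. F (T_source Y) j k * (T_coeff Y j k h * qbin (j - k) (h - k))) else 0)"
proof (cases "h \<le> j")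
  case True
  have "Ttil F Y j h = qbin j h * (\<Sum>k\<le>h. F (T_source Y) j k / qbin j k * (T_coeff Y j k h * qbin h k))"
    using True by (cases Y) (simp_all add: Ttil_def rho_def rho_inv_def Top_def T_source_def T_coeff_def qmon_def)
  also have "\<dots> = (\<Sum>k\<le>h. F (T_source Y) j k * (T_coeff Y j k h * qbin (j - k) (h - k)))"
    unfolding sum_distrib_left
  proof (rule sum.cong [OF refl])
    fix k assume "k \<in> {..h}"
    then have "qbin j h * qbin h k = qbin j k * qbin (j - k) (h - k)"
      using True by (simp add: qbin_trinomial_revision)
    then show "qbin j h * (F (T_source Y) j k / qbin j k * (T_coeff Y j k h * qbin h k))
        = F (T_source Y) j k * (T_coeff Y j k h * qbin (j - k) (h - k))"
      by (simp add: field_simps)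
  qed
  finally show ?thesis using True by simp
qed (simp add: Ttil_def rho_def Top_def)

lemma Rtil_eq:
  "Rtil F Y j h = (if h \<le> j then (\<Sum>k\<in>{h..j}. F (R_source Y) j k * (R_coeff Y j k h * qbin k h)) else 0)"
proof (cases "h \<le> j")
  case True
  have "Rtil F Y j h = qbin j h * (\<Sum>k\<in>{h..j}. F (R_source Y) j k / qbin j k * (R_coeff Y j k h * qbin (j - h) (k - h)))"
    using True by (cases Y) (simp_all add: Rtil_def rho_def rho_inv_def Rop_def R_source_def R_coeff_def qmon_def)
  also have "\<dots> = (\<Sum>k\<in>{h..j}. F (R_source Y) j k * (R_coeff Y j k h * qbin k h))"
    unfolding sum_distrib_left
  proof (rule sum.cong [OF refl])
    fix k assume "k \<in> {h..j}"
    then have "qbin j k * qbin k h = qbin j h * qbin (j - h) (k - h)"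
      by (simp add: qbin_trinomial_revision)
    then show "qbin j h * (F (R_source Y) j k / qbin j k * (R_coeff Y j k h * qbin (j - h) (k - h)))
        = F (R_source Y) j k * (R_coeff Y j k h * qbin k h)"
      by (simp add: field_simps)
  qed
  finally show ?thesis using True by simp
qed (simp add: Rtil_def rho_def Rop_def)

lemma sum_atMost_qbin_eq_qbinom:
  "l \<le> j \<Longrightarrow> (\<Sum>k\<le>l. g k * qbin (j - k) (l - k)) = (\<Sum>k\<le>j. g k * qbinom (j - k) (j - l))"
proof (rule sum.mono_neutral_cong_left)
  fix k assume "l \<le> j" "k \<in> {..l}"
  then show "g k * qbin (j - k) (l - k) = g k * qbinom (j - k) (j - l)"
    using qbin_symmetric [of "l - k" "j - k"] by (simp add: qbinom_def)
qed auto

lemma sum_atLeastAtMost_qbin_eq_qbinom: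
  "(\<Sum>k\<in>{l..j}. g k * qbin k l) = (\<Sum>k\<le>j. g k * qbinom k l)"
  by (rule sum.mono_neutral_cong_left) (auto simp: qbinom_def)

lemma sum_atMost_triangle_swap:
  "(\<Sum>h\<le>l. \<Sum>k\<le>h. g k h) = (\<Sum>k\<le>l. \<Sum>h\<in>{k..l}. g k h)" for l :: nat
proof -
  have "(\<Sum>h\<le>l. \<Sum>k\<le>h. g k h) = (\<Sum>h\<le>l. \<Sum>k\<in>{k\<in>{..l}. k \<le> h}. g k h)"
    by (intro sum.cong refl) auto
  also have "\<dots> = (\<Sum>k\<le>l. \<Sum>h\<in>{h\<in>{..l}. k \<le> h}. g k h)"
    by (rule sum.swap_restrict) simp_all
  also have "\<dots> = (\<Sum>k\<le>l. \<Sum>h\<in>{k..l}. g k h)"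
    by (intro sum.cong refl) auto
  finally show ?thesis .
qed

lemma Ttil_Ttil_kernel:
  assumes "l \<le> j"
    and coeff: "\<And>k h. k \<le> h \<Longrightarrow> h \<le> l \<Longrightarrow>
      T_coeff (T_source Y) j k h * T_coeff Y j h l = M k * qmon (int h) 0 (int h ^ 2)"
  shows "Ttil (Ttil F) Y j l
    = (\<Sum>k\<le>j. F Y j k * (M k * qmon (int k) 0 (int k ^ 2) * (qpp l / qpp k)) * qbinom (j - k) (j - l))"
proof -
  have "T_coeff (T_source Y) j k h * qbin (j - k) (h - k) * (T_coeff Y j h l * qbin (j - h) (l - h))
      = M k * qbin (j - k) (l - k) * (qmon (int h) 0 (int h ^ 2) * qbin (l - k) (h - k))"
    if "k \<le> h" "h \<le> l" for k h
  proof -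
    have "qbin (j - k) (h - k) * qbin (j - h) (l - h) = qbin (j - k) (l - k) * qbin (l - k) (h - k)"
      using that assms(1) qbin_trinomial_revision [of "h - k" "l - k" "j - k"] by (simp add: mult.commute)
    with coeff [OF that] show ?thesis by (simp add: mult_ac)
  qed
  then have "Ttil (Ttil F) Y j l = (\<Sum>h\<le>l. \<Sum>k\<le>h. F Y j k * (M k * qbin (j - k) (l - k))
      * (qmon (int h) 0 (int h ^ 2) * qbin (l - k) (h - k)))"
    using assms(1) by (simp add: Ttil_eq [of "Ttil F"] Ttil_eq [of F] sum_distrib_right mult.assoc)
  also have "\<dots> = (\<Sum>k\<le>l. F Y j k * (M k * qbin (j - k) (l - k))
      * (\<Sum>h\<in>{k..l}. qmon (int h) 0 (int h ^ 2) * qbin (l - k) (h - k)))"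
    by (simp add: sum_atMost_triangle_swap sum_distrib_left)
  also have "\<dots> = (\<Sum>k\<le>l. F Y j k * (M k * qmon (int k) 0 (int k ^ 2) * (qpp l / qpp k)) * qbin (j - k) (l - k))"
  proof (intro sum.cong refl)
    fix k assume "k \<in> {..l}"
    then have "(\<Sum>h\<in>{k..l}. qmon (int h) 0 (int h ^ 2) * qbin (l - k) (h - k)) = qmon (int k) 0 (int k ^ 2) * (qpp l / qpp k)"
      using sum_qmon_qbin [of k l k] by (simp add: algebra_simps power2_eq_square)
    then show "F Y j k * (M k * qbin (j - k) (l - k)) * (\<Sum>h\<in>{k..l}. qmon (int h) 0 (int h ^ 2) * qbin (l - k) (h - k))
        = F Y j k * (M k * qmon (int k) 0 (int k ^ 2) * (qpp l / qpp k)) * qbin (j - k) (l - k)"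
      by (simp add: mult_ac)
  qed
  also have "\<dots> = (\<Sum>k\<le>j. F Y j k * (M k * qmon (int k) 0 (int k ^ 2) * (qpp l / qpp k)) * qbinom (j - k) (j - l))"
    by (rule sum_atMost_qbin_eq_qbinom [OF assms(1)])
  finally show ?thesis .
qed

lemma sum_atLeastAtMost_triangle_swap:
  "(\<Sum>h\<in>{l..j}. \<Sum>k\<in>{h..j}. g k h) = (\<Sum>k\<in>{l..j}. \<Sum>h\<in>{l..k}. g k h)" for l j :: nat
proof -
  have "(\<Sum>h\<in>{l..j}. \<Sum>k\<in>{h..j}. g k h) = (\<Sum>h\<in>{l..j}. \<Sum>k\<in>{k\<in>{l..j}. h \<le> k}. g k h)"
    by (intro sum.cong refl) auto
  also have "\<dots> = (\<Sum>k\<in>{l..j}. \<Sum>h\<in>{h\<in>{l..j}. h \<le> k}. g k h)"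
    by (rule sum.swap_restrict) simp_all
  also have "\<dots> = (\<Sum>k\<in>{l..j}. \<Sum>h\<in>{l..k}. g k h)"
    by (intro sum.cong refl) auto
  finally show ?thesis .
qed

lemma Rtil_Rtil_kernel:
  assumes "l \<le> j"
    and coeff: "\<And>k h. l \<le> h \<Longrightarrow> h \<le> k \<Longrightarrow> k \<le> j \<Longrightarrow>
      R_coeff (R_source Y) j k h * R_coeff Y j h l = M k * qmon (int h) 0 (int h ^ 2 + 2 * int h * (int (j - k) - int l))"
  shows "Rtil (Rtil F) Y j l
    = (\<Sum>k\<le>j. F Y j k * (M k * qmon (int l) 0 (2 * int l * int (j - k) - int l ^ 2) * (qpp (j - l) / qpp (j - k)))
        * qbinom k l)"
proof -
  have "R_coeff (R_source Y) j k h * qbin k h * (R_coeff Y j h l * qbin h l)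
      = M k * qbin k l * (qmon (int h) 0 (int h ^ 2 + 2 * int h * (int (j - k) - int l)) * qbin (k - l) (h - l))"
    if "l \<le> h" "h \<le> k" "k \<le> j" for k h
    using coeff [OF that] qbin_trinomial_revision [of l h k] that by (simp add: mult_ac)
  then have "Rtil (Rtil F) Y j l = (\<Sum>h\<in>{l..j}. \<Sum>k\<in>{h..j}. F Y j k * (M k * qbin k l)
      * (qmon (int h) 0 (int h ^ 2 + 2 * int h * (int (j - k) - int l)) * qbin (k - l) (h - l)))"
    using assms(1) by (simp add: Rtil_eq [of "Rtil F"] Rtil_eq [of F] sum_distrib_right mult.assoc)
  also have "\<dots> = (\<Sum>k\<in>{l..j}. F Y j k * (M k * qbin k l)
      * (\<Sum>h\<in>{l..k}. qmon (int h) 0 (int h ^ 2 + 2 * int h * (int (j - k) - int l)) * qbin (k - l) (h - l)))"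
    by (simp add: sum_atLeastAtMost_triangle_swap sum_distrib_left)
  also have "\<dots> = (\<Sum>k\<in>{l..j}. F Y j k * (M k * qmon (int l) 0 (2 * int l * int (j - k) - int l ^ 2)
      * (qpp (j - l) / qpp (j - k))) * qbin k l)"
  proof (intro sum.cong refl)
    fix k assume "k \<in> {l..j}"
    then have "j - k + (k - l) = j - l" by simp
    with \<open>k \<in> {l..j}\<close> show "F Y j k * (M k * qbin k l)
        * (\<Sum>h\<in>{l..k}. qmon (int h) 0 (int h ^ 2 + 2 * int h * (int (j - k) - int l)) * qbin (k - l) (h - l))
      = F Y j k * (M k * qmon (int l) 0 (2 * int l * int (j - k) - int l ^ 2) * (qpp (j - l) / qpp (j - k))) * qbin k l"
      using sum_qmon_qbin [of l k "j - k"] by (simp add: mult_ac)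
  qed
  also have "\<dots> = (\<Sum>k\<le>j. F Y j k * (M k * qmon (int l) 0 (2 * int l * int (j - k) - int l ^ 2)
      * (qpp (j - l) / qpp (j - k))) * qbinom k l)"
    by (rule sum_atLeastAtMost_qbin_eq_qbinom)
  finally show ?thesis .
qed

lemma Ttil_Ttil_UP:
  assumes "l \<le> j"
  shows "Ttil (Ttil F) UP j l
    = (\<Sum>k\<le>j. F UP j k * (qmon (int l - 2 * int j + int k) 0 (2 * int k ^ 2) * (qpp l / qpp k)) * qbinom (j - k) (j - l))"
proof -
  have "T_coeff (T_source UP) j k h * T_coeff UP j h l = qmon (int l - 2 * int j) 0 (int k ^ 2) * qmon (int h) 0 (int h ^ 2)"
    for k h by (simp add: T_source_def T_coeff_def qmon_mult algebra_simps)
  then have "Ttil (Ttil F) UP j l = (\<Sum>k\<le>j. F UP j k * (qmon (int l - 2 * int j) 0 (int k ^ 2) * qmon (int k) 0 (int k ^ 2)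
      * (qpp l / qpp k)) * qbinom (j - k) (j - l))"
    by (rule Ttil_Ttil_kernel [OF assms])
  then show ?thesis by (simp add: qmon_mult algebra_simps)
qed

lemma Ttil_Ttil_OP:
  assumes "l \<le> j"
  shows "Ttil (Ttil F) OP j l
    = (\<Sum>k\<le>j. F OP j k * (qmon (int l + int k) (int k + int l) (2 * int k ^ 2 - 2 * int j * int k - 2 * int j * int l)
        * (qpp l / qpp k)) * qbinom (j - k) (j - l))"
proof -
  have "T_coeff (T_source OP) j k h * T_coeff OP j h l
      = qmon (int l) (int k + int l) (int k ^ 2 - 2 * int j * int k - 2 * int j * int l) * qmon (int h) 0 (int h ^ 2)"
    for k h by (simp add: T_source_def T_coeff_def qmon_mult algebra_simps)
  then have "Ttil (Ttil F) OP j l = (\<Sum>k\<le>j. F OP j k * (qmon (int l) (int k + int l) (int k ^ 2 - 2 * int j * int k - 2 * int j * int l)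
      * qmon (int k) 0 (int k ^ 2) * (qpp l / qpp k)) * qbinom (j - k) (j - l))"
    by (rule Ttil_Ttil_kernel [OF assms])
  then show ?thesis by (simp add: qmon_mult algebra_simps)
qed

lemma Rtil_Rtil_OP:
  assumes "l \<le> j"
  shows "Rtil (Rtil F) OP j l
    = (\<Sum>k\<le>j. F OP j k * (qmon (2 * int l - 2 * int j) (int k + int l - 2 * int j)
          ((int k - int j) ^ 2 + int j ^ 2 + 2 * int l * (int j - int k) - int l ^ 2)
        * (qpp (j - l) / qpp (j - k))) * qbinom k l)"
proof -
  have "R_coeff (R_source OP) j k h * R_coeff OP j h l
      = qmon (int l - 2 * int j) (int k + int l - 2 * int j) ((int k - int j) ^ 2 + int j ^ 2)
        * qmon (int h) 0 (int h ^ 2 + 2 * int h * (int (j - k) - int l))"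
    if "k \<le> j" for k h
    using that by (simp add: R_source_def R_coeff_def qmon_mult of_nat_diff algebra_simps)
  then have "Rtil (Rtil F) OP j l = (\<Sum>k\<le>j. F OP j k * (qmon (int l - 2 * int j) (int k + int l - 2 * int j) ((int k - int j) ^ 2 + int j ^ 2)
      * qmon (int l) 0 (2 * int l * int (j - k) - int l ^ 2) * (qpp (j - l) / qpp (j - k))) * qbinom k l)"
    by (rule Rtil_Rtil_kernel [OF assms])
  then show ?thesis by (simp add: qmon_mult of_nat_diff algebra_simps)
qed

lemma Rtil_Rtil_RI:
  assumes "l \<le> j"
  shows "Rtil (Rtil F) RI j l
    = (\<Sum>k\<le>j. F RI j k * (qmon (2 * int l) 0 (int k ^ 2 - 2 * int j ^ 2 + 2 * int l * int j + 2 * int l * (int j - int k) - int l ^ 2)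
        * (qpp (j - l) / qpp (j - k))) * qbinom k l)"
proof -
  have "R_coeff (R_source RI) j k h * R_coeff RI j h l
      = qmon (int l) 0 (int k ^ 2 - 2 * int j ^ 2 + 2 * int l * int j)
        * qmon (int h) 0 (int h ^ 2 + 2 * int h * (int (j - k) - int l))"
    if "k \<le> j" for k h
    using that by (simp add: R_source_def R_coeff_def qmon_mult of_nat_diff algebra_simps)
  then have "Rtil (Rtil F) RI j l = (\<Sum>k\<le>j. F RI j k * (qmon (int l) 0 (int k ^ 2 - 2 * int j ^ 2 + 2 * int l * int j)
      * qmon (int l) 0 (2 * int l * int (j - k) - int l ^ 2) * (qpp (j - l) / qpp (j - k))) * qbinom k l)"
    by (rule Rtil_Rtil_kernel [OF assms])
  then show ?thesis by (simp add: qmon_mult of_nat_diff algebra_simps)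
qed

lemma Ttil_Ttil_eq_0:
  assumes "(\<forall>k. F Y j k = 0) \<or> j < l"
  shows "Ttil (Ttil F) Y j l = 0"
  using assms by (auto simp: Ttil_eq [of "Ttil F"] Ttil_eq [of F])

lemma Rtil_Rtil_eq_0:
  assumes "(\<forall>k. F Y j k = 0) \<or> j < l"
  shows "Rtil (Rtil F) Y j l = 0"
  using assms by (auto simp: Rtil_eq [of "Rtil F"] Rtil_eq [of F])

section \<open>Splitting a block of summation indices\<close>

lemma (in comm_monoid_set) lessThan_add:
  "F g {..<m + n} = F g {..<m} \<^bold>* F (\<lambda>i. g (m + i)) {..<n :: nat}"
  by (induct n) (simp_all add: assoc)

lemma (in comm_monoid_set) lessThan_block:
  assumes "p + b \<le> n"
  shows "F g {..<n} = F g ({..<n} - {p..<p + b}) \<^bold>* F (\<lambda>i. g (p + i)) {..<b :: nat}"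
proof -
  have "F g {..<n} = F g ({..<n} - {p..<p + b}) \<^bold>* F g {p..<p + b}"
    by (rule subset_diff) (use assms in auto)
  also have "F g {p..<p + b} = F (\<lambda>i. g (p + i)) {..<b}"
    using shift_bounds_nat_ivl [of g 0 p b] by (simp add: atLeast0LessThan add.commute)
  finally show ?thesis .
qed

definition weak_compositions :: "nat \<Rightarrow> nat \<Rightarrow> (nat \<Rightarrow> nat) set" where
  "weak_compositions n j = {d. (\<forall>i\<ge>n. d i = 0) \<and> (\<Sum>i<n. d i) = j}"

lemma finite_weak_compositions [simp]: "finite (weak_compositions n j)"
proof (rule finite_subset)
  show "weak_compositions n j \<subseteq> {f. \<forall>x. (x \<in> {..<n} \<longrightarrow> f x \<in> {..j}) \<and> (x \<notin> {..<n} \<longrightarrow> f x = 0)}"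
    by (auto simp: weak_compositions_def intro: member_le_sum [of _ "{..<n}", simplified])
qed (intro finite_set_of_finite_funs; simp)

text \<open>In a vector \<open>D\<close> of length \<open>N + b\<close>, the coordinates \<open>N + i\<close> (\<open>i < b\<close>) are
  split off from the coordinates \<open>p + i\<close>; \<open>merge_block\<close> adds them back.\<close>
definition merge_block :: "nat \<Rightarrow> nat \<Rightarrow> nat \<Rightarrow> (nat \<Rightarrow> nat) \<Rightarrow> nat \<Rightarrow> nat" where
  "merge_block N p b D i =
     (if i < N then D i + (if p \<le> i \<and> i < p + b then D (N + (i - p)) else 0) else 0)"

definition split_block :: "nat \<Rightarrow> nat \<Rightarrow> nat \<Rightarrow> (nat \<Rightarrow> nat) \<Rightarrow> (nat \<Rightarrow> nat) \<Rightarrow> nat \<Rightarrow> nat" where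
  "split_block N p b d f i =
     (if i < N then d i - (if p \<le> i \<and> i < p + b then f (i - p) else 0)
      else if i < N + b then f (i - N) else 0)"

definition block_inversions :: "nat \<Rightarrow> nat \<Rightarrow> nat \<Rightarrow> (nat \<Rightarrow> nat) \<Rightarrow> nat" where
  "block_inversions N p b D = (\<Sum>i<b. \<Sum>i'<b. if i < i' then D (p + i) * D (N + i') else 0)"

lemma sum_merge_block:
  assumes "p + b \<le> N"
  shows "(\<Sum>i<N. merge_block N p b D i) = (\<Sum>i<N + b. D i)"
proof -
  have "(\<Sum>i<N. merge_block N p b D i)
      = (\<Sum>i<N. D i) + (\<Sum>i<N. if p \<le> i \<and> i < p + b then D (N + (i - p)) else 0)"
    by (simp add: merge_block_def sum.distrib)
  also have "(\<Sum>i<N. if p \<le> i \<and> i < p + b then D (N + (i - p)) else 0) = (\<Sum>i<b. D (N + i))"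
    by (subst sum.lessThan_block [OF assms]) (auto intro!: sum.neutral)
  finally show ?thesis by (simp add: sum.lessThan_add)
qed

lemma merge_block_mem:
  "p + b \<le> N \<Longrightarrow> D \<in> weak_compositions (N + b) j \<Longrightarrow> merge_block N p b D \<in> weak_compositions N j"
  by (simp add: weak_compositions_def sum_merge_block) (simp add: merge_block_def)

lemma merge_block_in_block:
  "p + b \<le> N \<Longrightarrow> i < b \<Longrightarrow> merge_block N p b D (p + i) = D (p + i) + D (N + i)"
  by (simp add: merge_block_def)

context
  fixes N p b :: nat and d :: "nat \<Rightarrow> nat" and j :: nat
  assumes block: "p + b \<le> N" and d: "d \<in> weak_compositions N j"
begin

lemma merge_split_block:
  assumes "f \<in> bounded_compositions b (\<lambda>i. d (p + i)) r"
  shows "merge_block N p b (split_block N p b d f) = d"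
proof
  fix i
  have "f (i - p) \<le> d i" if "p \<le> i" "i < p + b"
    using assms that by (auto simp: bounded_compositions_def dest: spec [of _ "i - p"])
  then show "merge_block N p b (split_block N p b d f) i = d i"
    using d by (auto simp: merge_block_def split_block_def weak_compositions_def)
qed

lemma split_block_new: "i < b \<Longrightarrow> split_block N p b d f (N + i) = f i"
  by (simp add: split_block_def)

lemma split_block_old: "i < b \<Longrightarrow> split_block N p b d f (p + i) = d (p + i) - f i"
  using block by (simp add: split_block_def)

lemma split_block_outside: "i < N \<Longrightarrow> i \<notin> {p..<p + b} \<Longrightarrow> split_block N p b d f i = d i"
  by (auto simp: split_block_def)

lemma split_block_mem:
  assumes "f \<in> bounded_compositions b (\<lambda>i. d (p + i)) r"
  shows "split_block N p b d f \<in> weak_compositions (N + b) j"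
proof -
  have "(\<Sum>i<N + b. split_block N p b d f i) = j"
    using sum_merge_block [OF block, of "split_block N p b d f"] merge_split_block [OF assms] d
    by (simp add: weak_compositions_def)
  then show ?thesis by (simp add: weak_compositions_def split_block_def)
qed

lemma sum_split_block_new:
  "f \<in> bounded_compositions b (\<lambda>i. d (p + i)) r \<Longrightarrow> (\<Sum>i<b. split_block N p b d f (N + i)) = r"
  by (simp add: split_block_new bounded_compositions_def)

lemma block_inversions_split_block:
  "block_inversions N p b (split_block N p b d f) = split_inversions b (\<lambda>i. d (p + i)) f"
  unfolding block_inversions_def split_inversions_def
  by (intro sum.cong refl) (simp add: split_block_new split_block_old)

lemma qmultinom_split_block:
  assumes f: "f \<in> bounded_compositions b (\<lambda>i. d (p + i)) r"
  shows "qmultinom (N + b) (split_block N p b d f) = qmultinom N d * (\<Prod>i<b. qbinom (d (p + i)) (f i))"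
proof -
  define D where "D = split_block N p b d f"
  define R where "R = (\<Prod>i\<in>{..<N} - {p..<p + b}. qpp (d i))"
  have f_le: "f i \<le> d (p + i)" if "i < b" for i
    using f that by (simp add: bounded_compositions_def)
  have "(\<Sum>i<N + b. D i) = (\<Sum>i<N. d i)"
    using split_block_mem [OF f] d by (simp add: D_def weak_compositions_def)
  moreover have "(\<Prod>i<N + b. qpp (D i)) = R * (\<Prod>i<b. qpp (d (p + i) - f i)) * (\<Prod>i<b. qpp (f i))"
  proof -
    have "(\<Prod>i<N + b. qpp (D i))
        = (\<Prod>i\<in>{..<N} - {p..<p + b}. qpp (D i)) * (\<Prod>i<b. qpp (D (p + i))) * (\<Prod>i<b. qpp (D (N + i)))"
      by (simp only: prod.lessThan_add prod.lessThan_block [OF block])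
    moreover have "(\<Prod>i\<in>{..<N} - {p..<p + b}. qpp (D i)) = R"
      unfolding R_def D_def by (rule prod.cong) (auto simp: split_block_outside)
    moreover have "(\<Prod>i<b. qpp (D (p + i))) = (\<Prod>i<b. qpp (d (p + i) - f i))"
      unfolding D_def by (rule prod.cong) (simp_all add: split_block_old)
    moreover have "(\<Prod>i<b. qpp (D (N + i))) = (\<Prod>i<b. qpp (f i))"
      unfolding D_def by (rule prod.cong) (simp_all add: split_block_new)
    ultimately show ?thesis by simp
  qed
  moreover have "(\<Prod>i<N. qpp (d i)) = R * (\<Prod>i<b. qpp (d (p + i)))"
    unfolding R_def by (rule prod.lessThan_block [OF block])
  moreover have "(\<Prod>i<b. qbinom (d (p + i)) (f i))
      = (\<Prod>i<b. qpp (d (p + i))) / ((\<Prod>i<b. qpp (f i)) * (\<Prod>i<b. qpp (d (p + i) - f i)))"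
  proof -
    have "(\<Prod>i<b. qbinom (d (p + i)) (f i)) = (\<Prod>i<b. qpp (d (p + i)) / (qpp (f i) * qpp (d (p + i) - f i)))"
      by (rule prod.cong) (simp_all add: qbinom_eq_qpp f_le)
    then show ?thesis by (simp add: prod_dividef prod.distrib)
  qed
  moreover have "R \<noteq> 0" by (simp add: R_def)
  ultimately show ?thesis
    unfolding D_def [symmetric] qmultinom_def by (simp add: field_simps)
qed

lemma fibre_merge_block_eq_image:
  "{D\<in>weak_compositions (N + b) j. merge_block N p b D = d \<and> (\<Sum>i<b. D (N + i)) = r}
    = split_block N p b d ` bounded_compositions b (\<lambda>i. d (p + i)) r"
proof (intro equalityI subsetI)
  fix D assume "D \<in> {D\<in>weak_compositions (N + b) j. merge_block N p b D = d \<and> (\<Sum>i<b. D (N + i)) = r}"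
  then have D: "D \<in> weak_compositions (N + b) j" and merge: "merge_block N p b D = d"
    and new: "(\<Sum>i<b. D (N + i)) = r" by auto
  define f where "f i = (if i < b then D (N + i) else 0)" for i
  have d_block: "d (p + i) = D (p + i) + D (N + i)" if "i < b" for i
    using merge_block_in_block [OF block that, of D] unfolding merge .
  have "f \<in> bounded_compositions b (\<lambda>i. d (p + i)) r"
    using new d_block by (auto simp: bounded_compositions_def f_def intro!: sum.cong)
  moreover have "split_block N p b d f = D"
  proof
    fix x
    show "split_block N p b d f x = D x"
    proof (cases "x < N")
      case True
      then show ?thesis
        using d_block [of "x - p"] unfolding merge [symmetric]
        by (auto simp: split_block_def merge_block_def f_def)
    next
      case False
      then show ?thesis using D by (auto simp: split_block_def f_def weak_compositions_def)
    qed
  qed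
  ultimately show "D \<in> split_block N p b d ` bounded_compositions b (\<lambda>i. d (p + i)) r" by blast
next
  fix D assume "D \<in> split_block N p b d ` bounded_compositions b (\<lambda>i. d (p + i)) r"
  then show "D \<in> {D\<in>weak_compositions (N + b) j. merge_block N p b D = d \<and> (\<Sum>i<b. D (N + i)) = r}"
    using merge_split_block split_block_mem sum_split_block_new by auto
qed

lemma inj_on_split_block: "inj_on (split_block N p b d) (bounded_compositions b (\<lambda>i. d (p + i)) r)"
proof (rule inj_onI, rule ext)
  fix f g i
  assume f: "f \<in> bounded_compositions b (\<lambda>i. d (p + i)) r" and g: "g \<in> bounded_compositions b (\<lambda>i. d (p + i)) r"
    and eq: "split_block N p b d f = split_block N p b d g"
  show "f i = g i"
  proof (cases "i < b")
    case True
    then show ?thesis using eq split_block_new [OF True, of f] split_block_new [OF True, of g] by simp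
  next
    case False
    then show ?thesis using f g by (simp add: bounded_compositions_def)
  qed
qed

lemma sum_fibre_merge_block:
  "(\<Sum>D\<in>{D\<in>weak_compositions (N + b) j. merge_block N p b D = d \<and> (\<Sum>i<b. D (N + i)) = r}.
      qv ^ (2 * block_inversions N p b D) * qmultinom (N + b) D)
    = qmultinom N d * qbinom (\<Sum>i<b. d (p + i)) r"
proof -
  have "(\<Sum>D\<in>{D\<in>weak_compositions (N + b) j. merge_block N p b D = d \<and> (\<Sum>i<b. D (N + i)) = r}.
      qv ^ (2 * block_inversions N p b D) * qmultinom (N + b) D)
    = (\<Sum>f\<in>bounded_compositions b (\<lambda>i. d (p + i)) r.
        qmultinom N d * ((\<Prod>i<b. qbinom (d (p + i)) (f i)) * qv ^ (2 * split_inversions b (\<lambda>i. d (p + i)) f)))"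
    unfolding fibre_merge_block_eq_image
    by (subst sum.reindex [OF inj_on_split_block])
      (simp add: block_inversions_split_block qmultinom_split_block mult_ac cong: sum.cong)
  also have "\<dots> = qmultinom N d * qbinom (\<Sum>i<b. d (p + i)) r"
    by (simp add: sum_distrib_left [symmetric] q_vandermonde_multi)
  finally show ?thesis .
qed


lemma sum_fibre_merge_block_old:
  "(\<Sum>D\<in>{D\<in>weak_compositions (N + b) j. merge_block N p b D = d \<and> (\<Sum>i<b. D (p + i)) = s}.
      qv ^ (2 * block_inversions N p b D) * qmultinom (N + b) D)
    = qmultinom N d * qbinom (\<Sum>i<b. d (p + i)) s"
proof -
  define c where "c = (\<Sum>i<b. d (p + i))"
  have block_sum: "(\<Sum>i<b. D (p + i)) + (\<Sum>i<b. D (N + i)) = c" if "merge_block N p b D = d" for D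
    using merge_block_in_block [OF block] unfolding c_def that [symmetric] by (simp add: sum.distrib)
  show ?thesis
  proof (cases "s \<le> c")
    case True
    then have "{D\<in>weak_compositions (N + b) j. merge_block N p b D = d \<and> (\<Sum>i<b. D (p + i)) = s}
        = {D\<in>weak_compositions (N + b) j. merge_block N p b D = d \<and> (\<Sum>i<b. D (N + i)) = c - s}"
      using block_sum by fastforce
    with True show ?thesis
      by (simp add: sum_fibre_merge_block c_def [symmetric] qbinom_def qbin_symmetric)
  next
    case False
    then have empty: "{D\<in>weak_compositions (N + b) j. merge_block N p b D = d \<and> (\<Sum>i<b. D (p + i)) = s} = {}"
      using block_sum by fastforce
    show ?thesis unfolding empty using False by (simp add: c_def)
  qed
qed

end


lemma sum_weak_compositions_merge_block:
  fixes g h :: "(nat \<Rightarrow> nat) \<Rightarrow> 'a::semiring_0"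
  assumes "p + b \<le> N"
  shows "(\<Sum>D\<in>{D\<in>weak_compositions (N + b) j. P D}. g (merge_block N p b D) * h D)
    = (\<Sum>d\<in>weak_compositions N j. g d * (\<Sum>D\<in>{D\<in>weak_compositions (N + b) j. merge_block N p b D = d \<and> P D}. h D))"
proof -
  have "(\<Sum>D\<in>{D\<in>weak_compositions (N + b) j. P D}. g (merge_block N p b D) * h D)
    = (\<Sum>d\<in>weak_compositions N j. \<Sum>D\<in>{D\<in>{D\<in>weak_compositions (N + b) j. P D}. merge_block N p b D = d}.
        g (merge_block N p b D) * h D)"
    by (rule sum.group [symmetric]) (auto simp: merge_block_mem [OF assms])
  also have "\<dots> = (\<Sum>d\<in>weak_compositions N j. g d * (\<Sum>D\<in>{D\<in>weak_compositions (N + b) j. merge_block N p b D = d \<and> P D}. h D))"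
    by (intro sum.cong refl) (simp add: conj_ac sum_distrib_left)
  finally show ?thesis .
qed

lemma sum_qbinom_new_block:
  assumes "p + b \<le> N"
  shows "(\<Sum>d\<in>weak_compositions N j. g d * (qmultinom N d * qbinom (\<Sum>i<b. d (p + i)) r))
    = (\<Sum>D\<in>{D\<in>weak_compositions (N + b) j. (\<Sum>i<b. D (N + i)) = r}.
        g (merge_block N p b D) * (qv ^ (2 * block_inversions N p b D) * qmultinom (N + b) D))"
  by (subst sum_weak_compositions_merge_block [OF assms]) (simp add: sum_fibre_merge_block assms)

lemma sum_qbinom_old_block:
  assumes "p + b \<le> N"
  shows "(\<Sum>d\<in>weak_compositions N j. g d * (qmultinom N d * qbinom (\<Sum>i<b. d (p + i)) s))
    = (\<Sum>D\<in>{D\<in>weak_compositions (N + b) j. (\<Sum>i<b. D (p + i)) = s}.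
        g (merge_block N p b D) * (qv ^ (2 * block_inversions N p b D) * qmultinom (N + b) D))"
  by (subst sum_weak_compositions_merge_block [OF assms]) (simp add: sum_fibre_merge_block_old assms)

section \<open>Quiver monomials\<close>

definition lin_form :: "nat \<Rightarrow> (nat \<Rightarrow> int) \<Rightarrow> (nat \<Rightarrow> nat) \<Rightarrow> int" where
  "lin_form N c D = (\<Sum>i<N. c i * int (D i))"

definition quad_form :: "nat \<Rightarrow> (nat \<Rightarrow> nat \<Rightarrow> int) \<Rightarrow> (nat \<Rightarrow> nat) \<Rightarrow> int" where
  "quad_form N Q D = (\<Sum>i<N. \<Sum>l<N. int (D i) * Q i l * int (D l))"

definition is_lin_form :: "nat \<Rightarrow> ((nat \<Rightarrow> nat) \<Rightarrow> int) \<Rightarrow> bool" where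
  "is_lin_form N f \<longleftrightarrow> (\<exists>c. \<forall>D. (\<forall>i\<ge>N. D i = 0) \<longrightarrow> f D = lin_form N c D)"

definition is_quad_form :: "nat \<Rightarrow> ((nat \<Rightarrow> nat) \<Rightarrow> int) \<Rightarrow> bool" where
  "is_quad_form N f \<longleftrightarrow> (\<exists>Q. symQ N Q \<and> (\<forall>D. (\<forall>i\<ge>N. D i = 0) \<longrightarrow> f D = quad_form N Q D))"

definition quiver_weight :: "nat \<Rightarrow> (nat \<Rightarrow> int) \<Rightarrow> (nat \<Rightarrow> int) \<Rightarrow> (nat \<Rightarrow> nat \<Rightarrow> int) \<Rightarrow> (nat \<Rightarrow> nat) \<Rightarrow> coef" where
  "quiver_weight N S A Q D = qmon (lin_form N S D) (lin_form N A D) (quad_form N Q D)"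

definition quiver_monomial :: "nat \<Rightarrow> ((nat \<Rightarrow> nat) \<Rightarrow> coef) \<Rightarrow> bool" where
  "quiver_monomial N w \<longleftrightarrow> (\<exists>S A Q. symQ N Q \<and> (\<forall>D. (\<forall>i\<ge>N. D i = 0) \<longrightarrow> w D = quiver_weight N S A Q D))"

lemma is_lin_form_coordinate: "is_lin_form N (\<lambda>D. int (D i))"
proof -
  have "lin_form N (\<lambda>x. if x = i then 1 else 0) D = (\<Sum>x<N. if x = i then int (D x) else 0)" for D
    unfolding lin_form_def by (intro sum.cong) auto
  then have "int (D i) = lin_form N (\<lambda>x. if x = i then 1 else 0) D" if "\<forall>i\<ge>N. D i = 0" for D
    using that by (cases "i < N") simp_all
  then show ?thesis unfolding is_lin_form_def by blast
qed

lemma is_lin_form_0: "is_lin_form N (\<lambda>D. 0)"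
  unfolding is_lin_form_def by (rule exI [of _ "\<lambda>_. 0"]) (simp add: lin_form_def)

lemma lin_form_add: "lin_form N (\<lambda>i. c i + c' i) D = lin_form N c D + lin_form N c' D"
  by (simp add: lin_form_def sum.distrib distrib_right)

lemma lin_form_scale: "lin_form N (\<lambda>i. a * c i) D = a * lin_form N c D"
  by (simp add: lin_form_def sum_distrib_left mult.assoc)

lemma is_lin_form_add:
  assumes "is_lin_form N f" "is_lin_form N g"
  shows "is_lin_form N (\<lambda>D. f D + g D)"
proof -
  obtain c c' where "\<forall>D. (\<forall>i\<ge>N. D i = 0) \<longrightarrow> f D = lin_form N c D"
    and "\<forall>D. (\<forall>i\<ge>N. D i = 0) \<longrightarrow> g D = lin_form N c' D"
    using assms unfolding is_lin_form_def by blast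
  then show ?thesis
    unfolding is_lin_form_def by (intro exI [of _ "\<lambda>i. c i + c' i"]) (simp add: lin_form_add)
qed

lemma is_lin_form_scale:
  assumes "is_lin_form N f"
  shows "is_lin_form N (\<lambda>D. a * f D)"
proof -
  obtain c where "\<forall>D. (\<forall>i\<ge>N. D i = 0) \<longrightarrow> f D = lin_form N c D"
    using assms unfolding is_lin_form_def by blast
  then show ?thesis
    unfolding is_lin_form_def by (intro exI [of _ "\<lambda>i. a * c i"]) (simp add: lin_form_scale)
qed

lemma is_lin_form_diff:
  "is_lin_form N f \<Longrightarrow> is_lin_form N g \<Longrightarrow> is_lin_form N (\<lambda>D. f D - g D)"
  using is_lin_form_add [of N f "\<lambda>D. -1 * g D"] is_lin_form_scale [of N g "-1"] by simp

lemma is_lin_form_sum: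
  assumes "\<And>t. t \<in> T \<Longrightarrow> is_lin_form N (f t)"
  shows "is_lin_form N (\<lambda>D. \<Sum>t\<in>T. f t D)"
proof -
  obtain c where c: "\<And>t D. t \<in> T \<Longrightarrow> \<forall>i\<ge>N. D i = 0 \<Longrightarrow> f t D = lin_form N (c t) D"
    using assms unfolding is_lin_form_def by metis
  have "(\<Sum>t\<in>T. f t D) = lin_form N (\<lambda>i. \<Sum>t\<in>T. c t i) D" if "\<forall>i\<ge>N. D i = 0" for D
  proof -
    have "(\<Sum>t\<in>T. f t D) = (\<Sum>t\<in>T. \<Sum>i<N. c t i * int (D i))"
      using c [OF _ that] by (simp add: lin_form_def)
    also have "\<dots> = lin_form N (\<lambda>i. \<Sum>t\<in>T. c t i) D"
      unfolding lin_form_def sum_distrib_right by (rule sum.swap)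
    finally show ?thesis .
  qed
  then show ?thesis unfolding is_lin_form_def by blast
qed

lemma is_lin_form_of_nat_add:
  "is_lin_form N (\<lambda>D. int (f D)) \<Longrightarrow> is_lin_form N (\<lambda>D. int (g D)) \<Longrightarrow> is_lin_form N (\<lambda>D. int (f D + g D))"
  using is_lin_form_add [of N "\<lambda>D. int (f D)" "\<lambda>D. int (g D)"] by simp

lemma is_lin_form_of_nat_sum:
  "(\<And>t. t \<in> T \<Longrightarrow> is_lin_form N (\<lambda>D. int (f t D))) \<Longrightarrow> is_lin_form N (\<lambda>D. int (\<Sum>t\<in>T. f t D))"
  using is_lin_form_sum [of T N "\<lambda>t D. int (f t D)"] by simp

lemma quad_form_add: "quad_form N (\<lambda>x y. Q x y + Q' x y) D = quad_form N Q D + quad_form N Q' D"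
  by (simp add: quad_form_def sum.distrib algebra_simps)

lemma quad_form_scale: "quad_form N (\<lambda>x y. a * Q x y) D = a * quad_form N Q D"
  by (simp add: quad_form_def sum_distrib_left algebra_simps)

lemma quad_form_sum: "quad_form N (\<lambda>x y. \<Sum>t\<in>T. Q t x y) D = (\<Sum>t\<in>T. quad_form N (Q t) D)"
  unfolding quad_form_def by (simp add: sum_distrib_left sum_distrib_right sum.swap [of _ T])

lemma quad_form_product: "quad_form N (\<lambda>x y. c x * c' y) D = lin_form N c D * lin_form N c' D"
  by (simp add: quad_form_def lin_form_def sum_product algebra_simps)

lemma is_quad_form_0: "is_quad_form N (\<lambda>D. 0)"
  unfolding is_quad_form_def by (rule exI [of _ "\<lambda>_ _. 0"]) (simp add: quad_form_def symQ_def)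

lemma is_quad_form_add:
  assumes "is_quad_form N f" "is_quad_form N g"
  shows "is_quad_form N (\<lambda>D. f D + g D)"
proof -
  obtain Q Q' where "symQ N Q" "\<forall>D. (\<forall>i\<ge>N. D i = 0) \<longrightarrow> f D = quad_form N Q D"
    and "symQ N Q'" "\<forall>D. (\<forall>i\<ge>N. D i = 0) \<longrightarrow> g D = quad_form N Q' D"
    using assms unfolding is_quad_form_def by blast
  then show ?thesis
    unfolding is_quad_form_def
    by (intro exI [of _ "\<lambda>x y. Q x y + Q' x y"]) (simp add: quad_form_add symQ_def)
qed

lemma is_quad_form_scale:
  assumes "is_quad_form N f"
  shows "is_quad_form N (\<lambda>D. a * f D)"
proof -
  obtain Q where "symQ N Q" "\<forall>D. (\<forall>i\<ge>N. D i = 0) \<longrightarrow> f D = quad_form N Q D"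
    using assms unfolding is_quad_form_def by blast
  then show ?thesis
    unfolding is_quad_form_def
    by (intro exI [of _ "\<lambda>x y. a * Q x y"]) (simp add: quad_form_scale symQ_def)
qed

lemma is_quad_form_diff:
  "is_quad_form N f \<Longrightarrow> is_quad_form N g \<Longrightarrow> is_quad_form N (\<lambda>D. f D - g D)"
  using is_quad_form_add [of N f "\<lambda>D. -1 * g D"] is_quad_form_scale [of N g "-1"] by simp

lemma is_quad_form_sum:
  assumes "\<And>t. t \<in> T \<Longrightarrow> is_quad_form N (f t)"
  shows "is_quad_form N (\<lambda>D. \<Sum>t\<in>T. f t D)"
proof -
  obtain Q where Q: "\<And>t. t \<in> T \<Longrightarrow> symQ N (Q t)"
    and f: "\<And>t D. t \<in> T \<Longrightarrow> \<forall>i\<ge>N. D i = 0 \<Longrightarrow> f t D = quad_form N (Q t) D"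
    using assms unfolding is_quad_form_def by metis
  have "symQ N (\<lambda>x y. \<Sum>t\<in>T. Q t x y)"
    using Q unfolding symQ_def by (auto intro: sum.cong)
  moreover have "(\<Sum>t\<in>T. f t D) = quad_form N (\<lambda>x y. \<Sum>t\<in>T. Q t x y) D" if "\<forall>i\<ge>N. D i = 0" for D
    using f [OF _ that] by (simp add: quad_form_sum)
  ultimately show ?thesis unfolding is_quad_form_def by blast
qed

lemma is_quad_form_square:
  assumes "is_lin_form N f"
  shows "is_quad_form N (\<lambda>D. f D ^ 2)"
proof -
  obtain c where "\<forall>D. (\<forall>i\<ge>N. D i = 0) \<longrightarrow> f D = lin_form N c D"
    using assms unfolding is_lin_form_def by blast
  then show ?thesis
    unfolding is_quad_form_def
    by (intro exI [of _ "\<lambda>x y. c x * c y"]) (simp add: quad_form_product symQ_def power2_eq_square mult.commute)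
qed

lemma is_quad_form_double_product:
  assumes "is_lin_form N f" "is_lin_form N g"
  shows "is_quad_form N (\<lambda>D. 2 * f D * g D)"
proof -
  obtain c c' where "\<forall>D. (\<forall>i\<ge>N. D i = 0) \<longrightarrow> f D = lin_form N c D"
    and "\<forall>D. (\<forall>i\<ge>N. D i = 0) \<longrightarrow> g D = lin_form N c' D"
    using assms unfolding is_lin_form_def by blast
  then show ?thesis
    unfolding is_quad_form_def
    by (intro exI [of _ "\<lambda>x y. c x * c' y + c' x * c y"]) (simp add: quad_form_add quad_form_product symQ_def)
qed

lemma is_quad_form_quad_form_subst:
  assumes Q: "symQ N Q" and L: "\<And>i. i < N \<Longrightarrow> is_lin_form N' (\<lambda>D. int (L D i))"
  shows "is_quad_form N' (\<lambda>D. quad_form N Q (L D))"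
proof -
  obtain C where C: "\<And>i D. i < N \<Longrightarrow> \<forall>i\<ge>N'. D i = 0 \<Longrightarrow> int (L D i) = lin_form N' (C i) D"
    using L unfolding is_lin_form_def by metis
  define M where "M x y = (\<Sum>i<N. \<Sum>l<N. Q i l * (C i x * C l y))" for x y
  have "symQ N' M"
  proof -
    have "M y x = M x y" for x y
    proof -
      have "M y x = (\<Sum>l<N. \<Sum>i<N. Q i l * (C i y * C l x))"
        unfolding M_def by (rule sum.swap)
      also have "\<dots> = M x y"
        unfolding M_def using Q by (intro sum.cong refl) (simp add: symQ_def mult_ac)
      finally show ?thesis .
    qed
    then show ?thesis by (simp add: symQ_def)
  qed
  moreover have "quad_form N Q (L D) = quad_form N' M D" if "\<forall>i\<ge>N'. D i = 0" for D
  proof -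
    have "quad_form N Q (L D) = (\<Sum>i<N. \<Sum>l<N. Q i l * (lin_form N' (C i) D * lin_form N' (C l) D))"
      unfolding quad_form_def using C [OF _ that] by (simp add: mult_ac)
    also have "\<dots> = quad_form N' M D"
      unfolding M_def by (simp add: quad_form_sum quad_form_scale quad_form_product)
    finally show ?thesis .
  qed
  ultimately show ?thesis unfolding is_quad_form_def by blast
qed

lemma is_lin_form_lin_form_subst:
  "(\<And>i. i < N \<Longrightarrow> is_lin_form N' (\<lambda>D. int (L D i))) \<Longrightarrow> is_lin_form N' (\<lambda>D. lin_form N S (L D))"
  unfolding lin_form_def by (intro is_lin_form_sum is_lin_form_scale) simp

lemma quiver_monomial_cong:
  "quiver_monomial N w \<Longrightarrow> (\<And>D. \<forall>i\<ge>N. D i = 0 \<Longrightarrow> w' D = w D) \<Longrightarrow> quiver_monomial N w'"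
  unfolding quiver_monomial_def by metis

lemma quiver_monomial_qmon:
  assumes "is_lin_form N f" "is_lin_form N g" "is_quad_form N h"
  shows "quiver_monomial N (\<lambda>D. qmon (f D) (g D) (h D))"
  using assms unfolding quiver_monomial_def quiver_weight_def is_lin_form_def is_quad_form_def by metis

lemma quiver_monomial_quiver_weight: "symQ N Q \<Longrightarrow> quiver_monomial N (quiver_weight N S A Q)"
  unfolding quiver_monomial_def by blast

lemma quiver_monomial_mult:
  assumes "quiver_monomial N v" "quiver_monomial N w"
  shows "quiver_monomial N (\<lambda>D. v D * w D)"
proof -
  obtain S A Q S' A' Q' where "symQ N Q" "symQ N Q'"
    and "\<forall>D. (\<forall>i\<ge>N. D i = 0) \<longrightarrow> v D = quiver_weight N S A Q D"
    and "\<forall>D. (\<forall>i\<ge>N. D i = 0) \<longrightarrow> w D = quiver_weight N S' A' Q' D"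
    using assms unfolding quiver_monomial_def by blast
  then show ?thesis
    unfolding quiver_monomial_def
    by (intro exI [of _ "\<lambda>i. S i + S' i"] exI [of _ "\<lambda>i. A i + A' i"] exI [of _ "\<lambda>x y. Q x y + Q' x y"])
      (simp add: symQ_def quiver_weight_def qmon_mult lin_form_add quad_form_add)
qed

lemma quiver_monomial_qv_power:
  "is_quad_form N (\<lambda>D. int (e D)) \<Longrightarrow> quiver_monomial N (\<lambda>D. qv ^ e D)"
  using quiver_monomial_qmon [OF is_lin_form_0 is_lin_form_0, of N "\<lambda>D. int (e D)"]
  by (simp add: qmon_def)

lemma quiver_monomial_subst:
  assumes w: "quiver_monomial N w"
    and L: "\<And>i. i < N \<Longrightarrow> is_lin_form N' (\<lambda>D. int (L D i))"
    and supp: "\<And>D i. \<forall>i\<ge>N'. D i = 0 \<Longrightarrow> N \<le> i \<Longrightarrow> L D i = 0"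
  shows "quiver_monomial N' (\<lambda>D. w (L D))"
proof -
  obtain S A Q where "symQ N Q"
    and w_eq: "\<And>D. \<forall>i\<ge>N. D i = 0 \<Longrightarrow> w D = quiver_weight N S A Q D"
    using w unfolding quiver_monomial_def by blast
  have "quiver_monomial N' (\<lambda>D. qmon (lin_form N S (L D)) (lin_form N A (L D)) (quad_form N Q (L D)))"
    using L \<open>symQ N Q\<close>
    by (intro quiver_monomial_qmon is_lin_form_lin_form_subst is_quad_form_quad_form_subst)
  then show ?thesis
    by (rule quiver_monomial_cong) (simp add: w_eq supp quiver_weight_def)
qed

lemma is_lin_form_merge_block: "is_lin_form M (\<lambda>D. int (merge_block N p b D i))"
proof -
  consider "i < N" "p \<le> i \<and> i < p + b" | "i < N" "\<not> (p \<le> i \<and> i < p + b)" | "\<not> i < N" by blast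
  then show ?thesis
  proof cases
    case 1
    then show ?thesis by (simp add: merge_block_def) (intro is_lin_form_add is_lin_form_coordinate)
  next
    case 2
    then have "merge_block N p b D i = D i" for D
      unfolding merge_block_def by auto
    then show ?thesis by (simp add: is_lin_form_coordinate)
  next
    case 3
    then show ?thesis by (simp add: merge_block_def is_lin_form_0)
  qed
qed

lemma quiver_monomial_merge_block:
  assumes "quiver_monomial N w"
  shows "quiver_monomial M (\<lambda>D. w (merge_block N p b D))"
  using assms is_lin_form_merge_block by (rule quiver_monomial_subst) (simp add: merge_block_def)

lemma is_quad_form_block_inversions: "is_quad_form M (\<lambda>D. int (2 * block_inversions N p b D))"
proof -
  have "int (2 * block_inversions N p b D)
      = (\<Sum>i<b. \<Sum>i'<b. if i < i' then 2 * int (D (p + i)) * int (D (N + i')) else 0)" for D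
    unfolding block_inversions_def of_nat_mult of_nat_sum sum_distrib_left by (intro sum.cong refl) simp
  moreover have "is_quad_form M (\<lambda>D. if i < i' then 2 * int (D (p + i)) * int (D (N + i')) else 0)" for i i'
    by (cases "i < i'") (simp_all add: is_quad_form_0 is_quad_form_double_product is_lin_form_coordinate)
  ultimately show ?thesis
    by (simp only:) (intro is_quad_form_sum)
qed

lemmas quiver_monomial_intros =
  quiver_monomial_qmon quiver_monomial_mult quiver_monomial_qv_power
  quiver_monomial_quiver_weight quiver_monomial_merge_block is_quad_form_block_inversions
  is_lin_form_0 is_lin_form_add is_lin_form_diff is_lin_form_scale
  is_lin_form_of_nat_add is_lin_form_of_nat_sum is_lin_form_coordinate is_lin_form_merge_block
  is_quad_form_add is_quad_form_diff is_quad_form_scale is_quad_form_square is_quad_form_double_product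

section \<open>Almost quiver forms under the squared twists\<close>

lemma aqf_eq:
  "aqf X m n S A Q K Y j k = (if Y = X then
     (\<Sum>d\<in>{d\<in>weak_compositions (m + n) j. (\<Sum>i<m. d i) = k}.
        quiver_weight (m + n) S A Q d * qpp (\<Sum>i<m + n. if K i then d i else 0) * qmultinom (m + n) d)
   else 0)"
  unfolding aqf_def quiver_weight_def qmon_def lin_form_def quad_form_def weak_compositions_def
  by (simp add: conj_assoc)

lemma aqf_extra_k:
  assumes "extra_k m n K"
  shows "aqf X m n S A Q K Y j k = (if Y = X then
     (\<Sum>d\<in>{d\<in>weak_compositions (m + n) j. (\<Sum>i<m. d i) = k}. quiver_weight (m + n) S A Q d * qpp k * qmultinom (m + n) d)
   else 0)"
proof -
  have "(\<Sum>i<m + n. if K i then d i else 0) = (\<Sum>i<m + n. if i < m then d i else 0)" for d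
    using assms by (intro sum.cong refl) (simp add: extra_k_def)
  also have "(\<Sum>i<m + n. if i < m then d i else 0) = (\<Sum>i<m. d i)" for d
    by (simp add: sum.lessThan_add)
  finally have K_part: "(\<Sum>i<m + n. if K i then d i else 0) = (\<Sum>i<m. d i)" for d .
  show ?thesis unfolding aqf_eq K_part by (auto intro!: sum.cong)
qed

lemma aqf_extra_jk:
  assumes "extra_jk m n K"
  shows "aqf X m n S A Q K Y j k = (if Y = X then
     (\<Sum>d\<in>{d\<in>weak_compositions (m + n) j. (\<Sum>i<m. d i) = k}. quiver_weight (m + n) S A Q d * qpp (j - k) * qmultinom (m + n) d)
   else 0)"
proof -
  have "(\<Sum>i<m + n. if K i then d i else 0) = j - k"
    if "d \<in> weak_compositions (m + n) j" "(\<Sum>i<m. d i) = k" for d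
  proof -
    have "(\<Sum>i<m + n. if K i then d i else 0) = (\<Sum>i<m + n. if m \<le> i then d i else 0)"
      using assms by (intro sum.cong refl) (simp add: extra_jk_def)
    also have "\<dots> = (\<Sum>i<n. d (m + i))"
      by (simp add: sum.lessThan_add)
    also have "\<dots> = j - k"
      using that by (auto simp: sum.lessThan_add weak_compositions_def)
    finally show ?thesis .
  qed
  then show ?thesis unfolding aqf_eq by (auto intro!: sum.cong)
qed

lemma sum_fibres_mult:
  fixes f :: "nat \<Rightarrow> 'a \<Rightarrow> 'b::semiring_0" and j :: nat
  assumes "finite A" "\<And>d. d \<in> A \<Longrightarrow> g d \<le> j"
  shows "(\<Sum>k\<le>j. (\<Sum>d\<in>{d\<in>A. g d = k}. f k d) * c k) = (\<Sum>d\<in>A. f (g d) d * c (g d))"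
proof -
  have "(\<Sum>k\<le>j. (\<Sum>d\<in>{d\<in>A. g d = k}. f k d) * c k) = (\<Sum>k\<le>j. \<Sum>d\<in>{d\<in>A. g d = k}. f (g d) d * c (g d))"
    by (simp add: sum_distrib_right)
  also have "\<dots> = (\<Sum>d\<in>A. f (g d) d * c (g d))"
    using assms by (intro sum.group) auto
  finally show ?thesis .
qed

lemma aqf_other_type: "Y \<noteq> X \<Longrightarrow> aqf X m n S A Q K Y j k = 0"
  by (simp add: aqf_def)

lemma aqf_eq_0: "j < k \<Longrightarrow> aqf X m n S A Q K Y j k = 0"
proof -
  assume "j < k"
  have empty: "{d\<in>weak_compositions (m + n) j. (\<Sum>i<m. d i) = k} = {}"
    using \<open>j < k\<close> by (auto simp: weak_compositions_def sum.lessThan_add)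
  show ?thesis unfolding aqf_eq empty by simp
qed

lemma Ttil_Ttil_aqf_coeff:
  fixes E :: "nat \<Rightarrow> nat \<Rightarrow> nat \<Rightarrow> coef"
  assumes K: "extra_k m n K" and "l \<le> j"
    and kernel: "Ttil (Ttil (aqf X m n S A Q K)) X j l
      = (\<Sum>k\<le>j. aqf X m n S A Q K X j k * (E j k l * (qpp l / qpp k)) * qbinom (j - k) (j - l))"
  shows "Ttil (Ttil (aqf X m n S A Q K)) X j l
    = (\<Sum>D\<in>{D\<in>weak_compositions (m + n + n) j. (\<Sum>i<m + n. D i) = l}.
        quiver_weight (m + n) S A Q (merge_block (m + n) m n D)
        * E (\<Sum>i<m + n + n. D i) (\<Sum>i<m. merge_block (m + n) m n D i) (\<Sum>i<m + n. D i)
        * qv ^ (2 * block_inversions (m + n) m n D) * (qpp l * qmultinom (m + n + n) D))"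
proof -
  define N where "N = m + n"
  define W where "W = quiver_weight N S A Q"
  have block_sum: "(\<Sum>i<m. d i) + (\<Sum>i<n. d (m + i)) = j" if "d \<in> weak_compositions N j" for d
    using that by (simp add: weak_compositions_def N_def sum.lessThan_add)
  then have block_rest: "j - (\<Sum>i<m. d i) = (\<Sum>i<n. d (m + i))" if "d \<in> weak_compositions N j" for d
    using that by fastforce
  have "Ttil (Ttil (aqf X m n S A Q K)) X j l = (\<Sum>k\<le>j. (\<Sum>d\<in>{d\<in>weak_compositions N j. (\<Sum>i<m. d i) = k}.
      W d * qpp k * qmultinom N d) * (E j k l * (qpp l / qpp k) * qbinom (j - k) (j - l)))"
    unfolding kernel aqf_extra_k [OF K] by (simp add: N_def W_def mult.assoc)
  also have "\<dots> = (\<Sum>d\<in>weak_compositions N j. W d * qpp (\<Sum>i<m. d i) * qmultinom N d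
      * (E j (\<Sum>i<m. d i) l * (qpp l / qpp (\<Sum>i<m. d i)) * qbinom (j - (\<Sum>i<m. d i)) (j - l)))"
    by (rule sum_fibres_mult) (use block_sum in fastforce)+
  also have "\<dots> = (\<Sum>d\<in>weak_compositions N j. W d * E j (\<Sum>i<m. d i) l * qpp l
      * (qmultinom N d * qbinom (\<Sum>i<n. d (m + i)) (j - l)))"
    using block_rest by (intro sum.cong refl) (simp add: field_simps)
  also have "\<dots> = (\<Sum>D\<in>{D\<in>weak_compositions (N + n) j. (\<Sum>i<n. D (N + i)) = j - l}.
      W (merge_block N m n D) * E j (\<Sum>i<m. merge_block N m n D i) l * qpp l
      * (qv ^ (2 * block_inversions N m n D) * qmultinom (N + n) D))"
    by (rule sum_qbinom_new_block) (simp add: N_def)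
  also have "\<dots> = (\<Sum>D\<in>{D\<in>weak_compositions (N + n) j. (\<Sum>i<N. D i) = l}.
      W (merge_block N m n D) * E (\<Sum>i<N + n. D i) (\<Sum>i<m. merge_block N m n D i) (\<Sum>i<N. D i)
      * qv ^ (2 * block_inversions N m n D) * (qpp l * qmultinom (N + n) D))"
  proof (rule sum.cong)
    show "{D\<in>weak_compositions (N + n) j. (\<Sum>i<n. D (N + i)) = j - l} = {D\<in>weak_compositions (N + n) j. (\<Sum>i<N. D i) = l}"
      using \<open>l \<le> j\<close> by (auto simp: weak_compositions_def sum.lessThan_add)
  qed (auto simp: weak_compositions_def mult_ac)
  finally show ?thesis by (simp add: N_def W_def)
qed

lemma Ttil_Ttil_aqf:
  fixes E :: "nat \<Rightarrow> nat \<Rightarrow> nat \<Rightarrow> coef"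
  assumes Q: "symQ (m + n) Q" and K: "extra_k m n K"
    and kernel: "\<And>F j l. l \<le> j \<Longrightarrow> Ttil (Ttil F) X j l
      = (\<Sum>k\<le>j. F X j k * (E j k l * (qpp l / qpp k)) * qbinom (j - k) (j - l))"
    and E: "quiver_monomial (m + n + n)
      (\<lambda>D. E (\<Sum>i<m + n + n. D i) (\<Sum>i<m. merge_block (m + n) m n D i) (\<Sum>i<m + n. D i))"
  shows "\<exists>S' A' Q' K'. symQ (m + n + n) Q' \<and> extra_k (m + n) n K' \<and>
    Ttil (Ttil (aqf X m n S A Q K)) = aqf X (m + n) n S' A' Q' K'"
proof -
  have "quiver_monomial (m + n + n) (\<lambda>D. quiver_weight (m + n) S A Q (merge_block (m + n) m n D)
      * E (\<Sum>i<m + n + n. D i) (\<Sum>i<m. merge_block (m + n) m n D i) (\<Sum>i<m + n. D i)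
      * qv ^ (2 * block_inversions (m + n) m n D))"
    using Q E by (intro quiver_monomial_intros)
  then obtain S' A' Q' where Q': "symQ (m + n + n) Q'"
    and weight: "\<And>D. \<forall>i\<ge>m + n + n. D i = 0 \<Longrightarrow> quiver_weight (m + n) S A Q (merge_block (m + n) m n D)
      * E (\<Sum>i<m + n + n. D i) (\<Sum>i<m. merge_block (m + n) m n D i) (\<Sum>i<m + n. D i)
      * qv ^ (2 * block_inversions (m + n) m n D) = quiver_weight (m + n + n) S' A' Q' D"
    unfolding quiver_monomial_def by blast
  have K': "extra_k (m + n) n (\<lambda>i. i < m + n)"
    by (simp add: extra_k_def)
  have "Ttil (Ttil (aqf X m n S A Q K)) Y j l = aqf X (m + n) n S' A' Q' (\<lambda>i. i < m + n) Y j l" for Y j l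
  proof (cases "Y = X \<and> l \<le> j")
    case True
    then have "Ttil (Ttil (aqf X m n S A Q K)) Y j l
        = (\<Sum>D\<in>{D\<in>weak_compositions (m + n + n) j. (\<Sum>i<m + n. D i) = l}.
            quiver_weight (m + n) S A Q (merge_block (m + n) m n D)
            * E (\<Sum>i<m + n + n. D i) (\<Sum>i<m. merge_block (m + n) m n D i) (\<Sum>i<m + n. D i)
            * qv ^ (2 * block_inversions (m + n) m n D) * (qpp l * qmultinom (m + n + n) D))"
      by (simp add: Ttil_Ttil_aqf_coeff [where E = E, OF K _ kernel])
    also have "\<dots> = (\<Sum>D\<in>{D\<in>weak_compositions (m + n + n) j. (\<Sum>i<m + n. D i) = l}.
            quiver_weight (m + n + n) S' A' Q' D * (qpp l * qmultinom (m + n + n) D))"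
      by (intro sum.cong refl arg_cong2 [where f = times] weight) (simp_all add: weak_compositions_def)
    also have "\<dots> = aqf X (m + n) n S' A' Q' (\<lambda>i. i < m + n) Y j l"
      using True by (simp add: aqf_extra_k [OF K'] mult.assoc)
    finally show ?thesis .
  next
    case False
    then consider "Y \<noteq> X" | "j < l" by linarith
    then show ?thesis by cases (simp_all add: Ttil_Ttil_eq_0 aqf_eq_0 aqf_other_type)
  qed
  with Q' K' show ?thesis by blast
qed

lemma Rtil_Rtil_aqf_coeff:
  fixes E :: "nat \<Rightarrow> nat \<Rightarrow> nat \<Rightarrow> coef"
  assumes K: "extra_jk m n K"
    and kernel: "Rtil (Rtil (aqf X m n S A Q K)) X j l
      = (\<Sum>k\<le>j. aqf X m n S A Q K X j k * (E j k l * (qpp (j - l) / qpp (j - k))) * qbinom k l)"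
  shows "Rtil (Rtil (aqf X m n S A Q K)) X j l
    = (\<Sum>D\<in>{D\<in>weak_compositions (m + (m + n)) j. (\<Sum>i<m. D i) = l}.
        quiver_weight (m + n) S A Q (merge_block (m + n) 0 m D)
        * E (\<Sum>i<m + (m + n). D i) (\<Sum>i<m. merge_block (m + n) 0 m D i) (\<Sum>i<m. D i)
        * qv ^ (2 * block_inversions (m + n) 0 m D) * (qpp (j - l) * qmultinom (m + (m + n)) D))"
proof -
  define N where "N = m + n"
  define W where "W = quiver_weight N S A Q"
  have active_le: "(\<Sum>i<m. d i) \<le> j" if "d \<in> weak_compositions N j" for d
    using that by (simp add: weak_compositions_def N_def sum.lessThan_add)
  have "Rtil (Rtil (aqf X m n S A Q K)) X j l = (\<Sum>k\<le>j. (\<Sum>d\<in>{d\<in>weak_compositions N j. (\<Sum>i<m. d i) = k}.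
      W d * qpp (j - k) * qmultinom N d) * (E j k l * (qpp (j - l) / qpp (j - k)) * qbinom k l))"
    unfolding kernel aqf_extra_jk [OF K] by (simp add: N_def W_def mult.assoc)
  also have "\<dots> = (\<Sum>d\<in>weak_compositions N j. W d * qpp (j - (\<Sum>i<m. d i)) * qmultinom N d
      * (E j (\<Sum>i<m. d i) l * (qpp (j - l) / qpp (j - (\<Sum>i<m. d i))) * qbinom (\<Sum>i<m. d i) l))"
    by (rule sum_fibres_mult) (use active_le in auto)
  also have "\<dots> = (\<Sum>d\<in>weak_compositions N j. W d * E j (\<Sum>i<m. d i) l * qpp (j - l)
      * (qmultinom N d * qbinom (\<Sum>i<m. d (0 + i)) l))"
    by (intro sum.cong refl) (simp add: field_simps)
  also have "\<dots> = (\<Sum>D\<in>{D\<in>weak_compositions (N + m) j. (\<Sum>i<m. D (0 + i)) = l}.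
      W (merge_block N 0 m D) * E j (\<Sum>i<m. merge_block N 0 m D i) l * qpp (j - l)
      * (qv ^ (2 * block_inversions N 0 m D) * qmultinom (N + m) D))"
    by (rule sum_qbinom_old_block) (simp add: N_def)
  also have "\<dots> = (\<Sum>D\<in>{D\<in>weak_compositions (N + m) j. (\<Sum>i<m. D i) = l}.
      W (merge_block N 0 m D) * E (\<Sum>i<N + m. D i) (\<Sum>i<m. merge_block N 0 m D i) (\<Sum>i<m. D i)
      * qv ^ (2 * block_inversions N 0 m D) * (qpp (j - l) * qmultinom (N + m) D))"
    by (intro sum.cong) (auto simp: weak_compositions_def mult_ac)
  also have "N + m = m + (m + n)"
    by (simp add: N_def)
  finally show ?thesis by (simp add: N_def W_def)
qed

lemma Rtil_Rtil_aqf: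
  fixes E :: "nat \<Rightarrow> nat \<Rightarrow> nat \<Rightarrow> coef"
  assumes Q: "symQ (m + n) Q" and K: "extra_jk m n K"
    and kernel: "\<And>F j l. l \<le> j \<Longrightarrow> Rtil (Rtil F) X j l
      = (\<Sum>k\<le>j. F X j k * (E j k l * (qpp (j - l) / qpp (j - k))) * qbinom k l)"
    and E: "quiver_monomial (m + (m + n))
      (\<lambda>D. E (\<Sum>i<m + (m + n). D i) (\<Sum>i<m. merge_block (m + n) 0 m D i) (\<Sum>i<m. D i))"
  shows "\<exists>S' A' Q' K'. symQ (m + (m + n)) Q' \<and> extra_jk m (m + n) K' \<and>
    Rtil (Rtil (aqf X m n S A Q K)) = aqf X m (m + n) S' A' Q' K'"
proof -
  have "quiver_monomial (m + (m + n)) (\<lambda>D. quiver_weight (m + n) S A Q (merge_block (m + n) 0 m D)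
      * E (\<Sum>i<m + (m + n). D i) (\<Sum>i<m. merge_block (m + n) 0 m D i) (\<Sum>i<m. D i)
      * qv ^ (2 * block_inversions (m + n) 0 m D))"
    using Q E by (intro quiver_monomial_intros)
  then obtain S' A' Q' where Q': "symQ (m + (m + n)) Q'"
    and weight: "\<And>D. \<forall>i\<ge>m + (m + n). D i = 0 \<Longrightarrow> quiver_weight (m + n) S A Q (merge_block (m + n) 0 m D)
      * E (\<Sum>i<m + (m + n). D i) (\<Sum>i<m. merge_block (m + n) 0 m D i) (\<Sum>i<m. D i)
      * qv ^ (2 * block_inversions (m + n) 0 m D) = quiver_weight (m + (m + n)) S' A' Q' D"
    unfolding quiver_monomial_def by blast
  have K': "extra_jk m (m + n) (\<lambda>i. m \<le> i)"
    by (simp add: extra_jk_def)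
  have "Rtil (Rtil (aqf X m n S A Q K)) Y j l = aqf X m (m + n) S' A' Q' (\<lambda>i. m \<le> i) Y j l" for Y j l
  proof (cases "Y = X \<and> l \<le> j")
    case True
    then have "Rtil (Rtil (aqf X m n S A Q K)) Y j l
        = (\<Sum>D\<in>{D\<in>weak_compositions (m + (m + n)) j. (\<Sum>i<m. D i) = l}.
            quiver_weight (m + n) S A Q (merge_block (m + n) 0 m D)
            * E (\<Sum>i<m + (m + n). D i) (\<Sum>i<m. merge_block (m + n) 0 m D i) (\<Sum>i<m. D i)
            * qv ^ (2 * block_inversions (m + n) 0 m D) * (qpp (j - l) * qmultinom (m + (m + n)) D))"
      by (simp add: Rtil_Rtil_aqf_coeff [where E = E, OF K kernel])
    also have "\<dots> = (\<Sum>D\<in>{D\<in>weak_compositions (m + (m + n)) j. (\<Sum>i<m. D i) = l}.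
            quiver_weight (m + (m + n)) S' A' Q' D * (qpp (j - l) * qmultinom (m + (m + n)) D))"
      by (intro sum.cong refl arg_cong2 [where f = times] weight) (simp_all add: weak_compositions_def)
    also have "\<dots> = aqf X m (m + n) S' A' Q' (\<lambda>i. m \<le> i) Y j l"
      using True by (simp add: aqf_extra_jk [OF K'] mult.assoc)
    finally show ?thesis .
  next
    case False
    then consider "Y \<noteq> X" | "j < l" by linarith
    then show ?thesis by cases (simp_all add: Rtil_Rtil_eq_0 aqf_eq_0 aqf_other_type)
  qed
  with Q' K' show ?thesis by blast
qed

lemma Ttil_Ttil_aqf_UP:
  assumes "symQ (m + n) Q" "extra_k m n K"
  shows "\<exists>S' A' Q' K'. symQ (m + n + n) Q' \<and> extra_k (m + n) n K' \<and>
    Ttil (Ttil (aqf UP m n S A Q K)) = aqf UP (m + n) n S' A' Q' K'"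
  by (rule Ttil_Ttil_aqf [OF assms Ttil_Ttil_UP]) (assumption | intro quiver_monomial_intros)+

lemma Ttil_Ttil_aqf_OP:
  assumes "symQ (m + n) Q" "extra_k m n K"
  shows "\<exists>S' A' Q' K'. symQ (m + n + n) Q' \<and> extra_k (m + n) n K' \<and>
    Ttil (Ttil (aqf OP m n S A Q K)) = aqf OP (m + n) n S' A' Q' K'"
  by (rule Ttil_Ttil_aqf [OF assms Ttil_Ttil_OP]) (assumption | intro quiver_monomial_intros)+

lemma Rtil_Rtil_aqf_OP:
  assumes "symQ (m + n) Q" "extra_jk m n K"
  shows "\<exists>S' A' Q' K'. symQ (m + (m + n)) Q' \<and> extra_jk m (m + n) K' \<and>
    Rtil (Rtil (aqf OP m n S A Q K)) = aqf OP m (m + n) S' A' Q' K'"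
  by (rule Rtil_Rtil_aqf [OF assms Rtil_Rtil_OP]) (assumption | intro quiver_monomial_intros)+

lemma Rtil_Rtil_aqf_RI:
  assumes "symQ (m + n) Q" "extra_jk m n K"
  shows "\<exists>S' A' Q' K'. symQ (m + (m + n)) Q' \<and> extra_jk m (m + n) K' \<and>
    Rtil (Rtil (aqf RI m n S A Q K)) = aqf RI m (m + n) S' A' Q' K'"
  by (rule Rtil_Rtil_aqf [OF assms Rtil_Rtil_RI]) (assumption | intro quiver_monomial_intros)+

theorem mainTheorem10:
  fixes m n :: nat and S A :: "nat \<Rightarrow> int" and Q :: "nat \<Rightarrow> nat \<Rightarrow> int" and K :: "nat \<Rightarrow> bool"
  assumes "symQ (m+n) Q"
  shows "(extra_k m n K \<longrightarrow>
           (\<exists>S' A' Q' K'. symQ ((m+n)+n) Q' \<and> extra_k (m+n) n K' \<and>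
              Ttil (Ttil (aqf UP m n S A Q K)) = aqf UP (m+n) n S' A' Q' K'))
       \<and> (extra_k m n K \<longrightarrow>
           (\<exists>S' A' Q' K'. symQ ((m+n)+n) Q' \<and> extra_k (m+n) n K' \<and>
              Ttil (Ttil (aqf OP m n S A Q K)) = aqf OP (m+n) n S' A' Q' K'))
       \<and> (extra_jk m n K \<longrightarrow>
           (\<exists>S' A' Q' K'. symQ (m+(m+n)) Q' \<and> extra_jk m (m+n) K' \<and>
              Rtil (Rtil (aqf OP m n S A Q K)) = aqf OP m (m+n) S' A' Q' K'))
       \<and> (extra_jk m n K \<longrightarrow>
           (\<exists>S' A' Q' K'. symQ (m+(m+n)) Q' \<and> extra_jk m (m+n) K' \<and>
              Rtil (Rtil (aqf RI m n S A Q K)) = aqf RI m (m+n) S' A' Q' K'))"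
  using Ttil_Ttil_aqf_UP [OF assms] Ttil_Ttil_aqf_OP [OF assms]
    Rtil_Rtil_aqf_OP [OF assms] Rtil_Rtil_aqf_RI [OF assms]
  by blast

end
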